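(* Let $F$ and $G$ be groups. The map $\mathfrak{F}\colon O(F)\times O(G)\to O(F*G)$ sending $(<_F,<_G)$ to the ordering $\prec$ of $F*G$ described in the context is continuous and injective.
   Context: For a group $H$, $O(H)$ is the set of all orderings of $H$ (strict total orders invariant under left and right multiplication), with topology whose basic open sets are, for finite $S\subset H$, the sets of orderings in which all elements of $S$ exceed the identity. Construction of $\prec=\mathfrak{F}(<_F,<_G)$: order $F\times G$ lexicographically ($(f,g)<(f',g')$ iff $f<_Ff'$, or $f=f'$ and $g<_Gg'$); in $R=\mathbb{Z}(F\times G)$ call a nonzero element positive if the coefficient of its largest group element is a positive integer. Let $\rho\colon F*G\to M_2(R[t])$ be the injective homomorphism with $\rho(f)=\begin{pmatrix} f&(f-1)t\\0&1\end{pmatrix}$ ($f\in F$), $\rho(g)=\begin{pmatrix}1&0\\(g-1)t&g\end{pmatrix}$ ($g\in G$). Order the matrix positions $(1,1)$, $(2,2)$, then the off-diagonal positions in a fixed order. A nonzero $M=\sum_iM_it^i$ ($M_i\in M_2(R)$) is positive if for the least $n$ with $M_n\ne0$ the first nonzero entry of $M_n$ is positive in $R$. Set $x\prec y$ iff $\rho(y)-\rho(x)$ is positive. *)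

theory Defs
  imports "HOL-Algebra.Group" "HOL-Analysis.Product_Topology"
begin

text \<open>An ordering of a group H: a strict total order on the carrier (given as the set of
  pairs (x,y) with x < y), invariant under left and right multiplication.\<close>
definition orderings :: "('g, 'm) monoid_scheme \<Rightarrow> 'g rel set" where
  "orderings H = {R. R \<subseteq> carrier H \<times> carrier H \<and> strict_linear_order_on (carrier H) R \<and>
      (\<forall>a\<in>carrier H. \<forall>x\<in>carrier H. \<forall>y\<in>carrier H. (x, y) \<in> R \<longrightarrow>
          (a \<otimes>\<^bsub>H\<^esub> x, a \<otimes>\<^bsub>H\<^esub> y) \<in> R \<and> (x \<otimes>\<^bsub>H\<^esub> a, y \<otimes>\<^bsub>H\<^esub> a) \<in> R)}"

definition ord_basic :: "('g, 'm) monoid_scheme \<Rightarrow> 'g set \<Rightarrow> 'g rel set" where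
  "ord_basic H S = {R \<in> orderings H. \<forall>s\<in>S. (\<one>\<^bsub>H\<^esub>, s) \<in> R}"

definition ord_topology :: "('g, 'm) monoid_scheme \<Rightarrow> 'g rel topology" where
  "ord_topology H = topology_generated_by {ord_basic H S | S. finite S \<and> S \<subseteq> carrier H}"

fun fp_valid :: "('a, 'c) monoid_scheme \<Rightarrow> ('b, 'd) monoid_scheme \<Rightarrow> 'a + 'b \<Rightarrow> bool" where
  "fp_valid F G (Inl f) = (f \<in> carrier F \<and> f \<noteq> \<one>\<^bsub>F\<^esub>)"
| "fp_valid F G (Inr g) = (g \<in> carrier G \<and> g \<noteq> \<one>\<^bsub>G\<^esub>)"

fun fp_reduced :: "('a, 'c) monoid_scheme \<Rightarrow> ('b, 'd) monoid_scheme \<Rightarrow> ('a + 'b) list \<Rightarrow> bool" where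
  "fp_reduced F G [] = True"
| "fp_reduced F G [l] = fp_valid F G l"
| "fp_reduced F G (l1 # l2 # w) =
     (fp_valid F G l1 \<and> isl l1 \<noteq> isl l2 \<and> fp_reduced F G (l2 # w))"

fun fp_cons :: "('a, 'c) monoid_scheme \<Rightarrow> ('b, 'd) monoid_scheme \<Rightarrow> 'a + 'b \<Rightarrow> ('a + 'b) list \<Rightarrow> ('a + 'b) list" where
  "fp_cons F G (Inl f) (Inl f' # w) =
     (if f \<otimes>\<^bsub>F\<^esub> f' = \<one>\<^bsub>F\<^esub> then w else Inl (f \<otimes>\<^bsub>F\<^esub> f') # w)"
| "fp_cons F G (Inr g) (Inr g' # w) =
     (if g \<otimes>\<^bsub>G\<^esub> g' = \<one>\<^bsub>G\<^esub> then w else Inr (g \<otimes>\<^bsub>G\<^esub> g') # w)"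
| "fp_cons F G l w = l # w"

definition free_product :: "('a, 'c) monoid_scheme \<Rightarrow> ('b, 'd) monoid_scheme \<Rightarrow> ('a + 'b) list monoid" where
  "free_product F G =
     \<lparr>carrier = {w. fp_reduced F G w},
      mult = (\<lambda>u v. foldr (fp_cons F G) u v),
      one = []\<rparr>"

text \<open>Elements of the group ring of a group H: functions H \<Rightarrow> int (only finitely supported
  ones on the carrier arise).\<close>
definition gr_delta :: "'g \<Rightarrow> ('g \<Rightarrow> int)" where
  "gr_delta x = (\<lambda>y. if y = x then 1 else 0)"

definition gr_conv :: "('g, 'm) monoid_scheme \<Rightarrow> ('g \<Rightarrow> int) \<Rightarrow> ('g \<Rightarrow> int) \<Rightarrow> ('g \<Rightarrow> int)" where
  "gr_conv H a b = (\<lambda>x. if x \<in> carrier H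
      then (\<Sum>y\<in>{y \<in> carrier H. a y \<noteq> 0}. a y * b (inv\<^bsub>H\<^esub> y \<otimes>\<^bsub>H\<^esub> x)) else 0)"

text \<open>A 2x2 matrix over R[t] is M i j n = coefficient (in R) of t^n in entry (i,j), i,j \<in> {0,1}.\<close>
type_synonym 'g pmat = "nat \<Rightarrow> nat \<Rightarrow> nat \<Rightarrow> 'g \<Rightarrow> int"

definition pmat_mult :: "('g, 'm) monoid_scheme \<Rightarrow> 'g pmat \<Rightarrow> 'g pmat \<Rightarrow> 'g pmat" where
  "pmat_mult H M N = (\<lambda>i j n x. \<Sum>k<2. \<Sum>m\<le>n. gr_conv H (M i k m) (N k j (n - m)) x)"

definition pmat_one :: "('g, 'm) monoid_scheme \<Rightarrow> 'g pmat" where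
  "pmat_one H = (\<lambda>i j n. if i = j \<and> n = 0 then gr_delta \<one>\<^bsub>H\<^esub> else (\<lambda>_. 0))"

text \<open>rho(f) = [[f, (f-1)t],[0,1]],  rho(g) = [[1,0],[(g-1)t, g]], with f = (f,1), g = (1,g).\<close>
fun rho_letter :: "('a, 'c) monoid_scheme \<Rightarrow> ('b, 'd) monoid_scheme \<Rightarrow> 'a + 'b \<Rightarrow> ('a \<times> 'b) pmat" where
  "rho_letter F G (Inl f) = (\<lambda>i j n.
     if (i, j, n) = (0, 0, 0) then gr_delta (f, \<one>\<^bsub>G\<^esub>)
     else if (i, j, n) = (0, 1, 1) then (\<lambda>x. gr_delta (f, \<one>\<^bsub>G\<^esub>) x - gr_delta (\<one>\<^bsub>F\<^esub>, \<one>\<^bsub>G\<^esub>) x)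
     else if (i, j, n) = (1, 1, 0) then gr_delta (\<one>\<^bsub>F\<^esub>, \<one>\<^bsub>G\<^esub>)
     else (\<lambda>_. 0))"
| "rho_letter F G (Inr g) = (\<lambda>i j n.
     if (i, j, n) = (0, 0, 0) then gr_delta (\<one>\<^bsub>F\<^esub>, \<one>\<^bsub>G\<^esub>)
     else if (i, j, n) = (1, 0, 1) then (\<lambda>x. gr_delta (\<one>\<^bsub>F\<^esub>, g) x - gr_delta (\<one>\<^bsub>F\<^esub>, \<one>\<^bsub>G\<^esub>) x)
     else if (i, j, n) = (1, 1, 0) then gr_delta (\<one>\<^bsub>F\<^esub>, g)
     else (\<lambda>_. 0))"

definition rho :: "('a, 'c) monoid_scheme \<Rightarrow> ('b, 'd) monoid_scheme \<Rightarrow> ('a + 'b) list \<Rightarrow> ('a \<times> 'b) pmat" where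
  "rho F G w = foldr (\<lambda>l M. pmat_mult (F \<times>\<times> G) (rho_letter F G l) M) w (pmat_one (F \<times>\<times> G))"

definition lex_ord :: "'a rel \<Rightarrow> 'b rel \<Rightarrow> ('a \<times> 'b) rel" where
  "lex_ord LF LG = {((f, g), (f', g')). (f, f') \<in> LF \<or> (f = f' \<and> (g, g') \<in> LG)}"

definition gr_pos :: "('a, 'c) monoid_scheme \<Rightarrow> ('b, 'd) monoid_scheme \<Rightarrow> 'a rel \<Rightarrow> 'b rel \<Rightarrow> ('a \<times> 'b \<Rightarrow> int) \<Rightarrow> bool" where
  "gr_pos F G LF LG a \<longleftrightarrow>
     (\<exists>m \<in> carrier F \<times> carrier G. a m > 0 \<and>
        (\<forall>y \<in> carrier F \<times> carrier G. a y \<noteq> 0 \<and> y \<noteq> m \<longrightarrow> (y, m) \<in> lex_ord LF LG))"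

definition gr_nonzero :: "('a, 'c) monoid_scheme \<Rightarrow> ('b, 'd) monoid_scheme \<Rightarrow> ('a \<times> 'b \<Rightarrow> int) \<Rightarrow> bool" where
  "gr_nonzero F G a \<longleftrightarrow> (\<exists>x \<in> carrier F \<times> carrier G. a x \<noteq> 0)"

text \<open>Order of matrix positions: (1,1), (2,2), (1,2), (2,1)  (0-based indices here).\<close>
definition positions :: "(nat \<times> nat) list" where
  "positions = [(0, 0), (1, 1), (0, 1), (1, 0)]"

definition pmat_pos :: "('a, 'c) monoid_scheme \<Rightarrow> ('b, 'd) monoid_scheme \<Rightarrow> 'a rel \<Rightarrow> 'b rel \<Rightarrow> ('a \<times> 'b) pmat \<Rightarrow> bool" where
  "pmat_pos F G LF LG M \<longleftrightarrow>
     (\<exists>n. (\<exists>(i, j) \<in> set positions. gr_nonzero F G (M i j n)) \<and>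
          (\<forall>m < n. \<forall>(i, j) \<in> set positions. \<not> gr_nonzero F G (M i j m)) \<and>
          (case filter (\<lambda>(i, j). gr_nonzero F G (M i j n)) positions of
              (i, j) # _ \<Rightarrow> gr_pos F G LF LG (M i j n)
            | [] \<Rightarrow> False))"

definition frakF :: "('a, 'c) monoid_scheme \<Rightarrow> ('b, 'd) monoid_scheme \<Rightarrow> 'a rel \<Rightarrow> 'b rel \<Rightarrow> ('a + 'b) list rel" where
  "frakF F G LF LG =
     {(x, y). x \<in> carrier (free_product F G) \<and> y \<in> carrier (free_product F G) \<and>
        pmat_pos F G LF LG (\<lambda>i j n z. rho F G y i j n z - rho F G x i j n z)}"

end

theory Submission
  imports Defs
begin

text \<open>Let K = F \<times> G, ordered lexicographically, and call a matrix over \<int>K[t] positive if its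
  lowest nonvanishing coefficient, read in the fixed order of matrix positions, has a positive
  leading term. Positive matrices are closed under addition, and multiplying by rho(l) for a
  letter l, on either side, keeps the lowest degree and only translates its coefficients by an
  element of K, which preserves the ordering of K. So positivity is invariant under multiplication
  by rho(F * G) on both sides. As rho is faithful (the degree of rho(w) is the length of the
  reduced word w, and its top coefficient cannot cancel because K is torsion-free), x \<prec> y iff
  rho(y) - rho(x) is positive is a bi-invariant total order. Whether 1 \<prec> s holds depends only
  on how the orderings of F and G compare finitely many elements, which gives continuity; and
  they are the restrictions of \<prec> to F and G, which gives injectivity.\<close>

section \<open>Translations in the group ring\<close>

definition gr_lmult :: "('g, 'm) monoid_scheme \<Rightarrow> 'g \<Rightarrow> ('g \<Rightarrow> int) \<Rightarrow> 'g \<Rightarrow> int" where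
  "gr_lmult K h e = (\<lambda>x. if x \<in> carrier K then e (inv\<^bsub>K\<^esub> h \<otimes>\<^bsub>K\<^esub> x) else 0)"

definition gr_rmult :: "('g, 'm) monoid_scheme \<Rightarrow> 'g \<Rightarrow> ('g \<Rightarrow> int) \<Rightarrow> 'g \<Rightarrow> int" where
  "gr_rmult K h e = (\<lambda>x. if x \<in> carrier K then e (x \<otimes>\<^bsub>K\<^esub> inv\<^bsub>K\<^esub> h) else 0)"

lemma gr_mult_outside_carrier [simp]:
  "x \<notin> carrier K \<Longrightarrow> gr_lmult K h e x = 0"
  "x \<notin> carrier K \<Longrightarrow> gr_rmult K h e x = 0"
  by (simp_all add: gr_lmult_def gr_rmult_def)

lemma gr_mult_linear:
  "gr_lmult K h (\<lambda>x. a x + b x) = (\<lambda>x. gr_lmult K h a x + gr_lmult K h b x)"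
  "gr_lmult K h (\<lambda>x. a x - b x) = (\<lambda>x. gr_lmult K h a x - gr_lmult K h b x)"
  "gr_lmult K h (\<lambda>x. if P then 0 else a x) = (\<lambda>x. if P then 0 else gr_lmult K h a x)"
  "gr_lmult K h (\<lambda>x. 0) = (\<lambda>x. 0)"
  "gr_rmult K h (\<lambda>x. a x + b x) = (\<lambda>x. gr_rmult K h a x + gr_rmult K h b x)"
  "gr_rmult K h (\<lambda>x. a x - b x) = (\<lambda>x. gr_rmult K h a x - gr_rmult K h b x)"
  "gr_rmult K h (\<lambda>x. if P then 0 else a x) = (\<lambda>x. if P then 0 else gr_rmult K h a x)"
  "gr_rmult K h (\<lambda>x. 0) = (\<lambda>x. 0)"
  by (auto simp: gr_lmult_def gr_rmult_def)

definition finite_support :: "('g \<Rightarrow> int) \<Rightarrow> bool" where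
  "finite_support e \<longleftrightarrow> finite {x. e x \<noteq> 0}"

lemma finite_support_add: "finite_support a \<Longrightarrow> finite_support b \<Longrightarrow> finite_support (\<lambda>x. a x + b x)"
  and finite_support_diff: "finite_support a \<Longrightarrow> finite_support b \<Longrightarrow> finite_support (\<lambda>x. a x - b x)"
  unfolding finite_support_def
  by (auto intro: finite_subset[of _ "{x. a x \<noteq> 0} \<union> {x. b x \<noteq> 0}"])

lemma finite_support_if0: "(\<not> P \<Longrightarrow> finite_support a) \<Longrightarrow> finite_support (\<lambda>x. if P then 0 else a x)"
  and finite_support_zero: "finite_support (\<lambda>x. 0)"
  unfolding finite_support_def by (cases P) auto

context group
begin

lemma gr_lmult_lmult: "h \<in> carrier G \<Longrightarrow> h' \<in> carrier G \<Longrightarrow> gr_lmult G h (gr_lmult G h' e) = gr_lmult G (h \<otimes> h') e"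
  by (auto simp: gr_lmult_def inv_mult_group m_assoc)

lemma gr_lmult_rmult: "h \<in> carrier G \<Longrightarrow> h' \<in> carrier G \<Longrightarrow> gr_lmult G h (gr_rmult G h' e) = gr_rmult G h' (gr_lmult G h e)"
  by (auto simp: gr_lmult_def gr_rmult_def m_assoc)

lemma gr_lmult_one: "(\<And>x. x \<notin> carrier G \<Longrightarrow> e x = 0) \<Longrightarrow> gr_lmult G \<one> e = e"
  by (auto simp: gr_lmult_def)

lemma gr_lmult_delta: "h \<in> carrier G \<Longrightarrow> gr_lmult G h (gr_delta \<one>) = gr_delta h"
  and gr_rmult_delta: "h \<in> carrier G \<Longrightarrow> gr_rmult G h (gr_delta \<one>) = gr_delta h"
  by (auto simp: gr_lmult_def gr_rmult_def gr_delta_def inv_solve_left' inv_solve_right')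

lemma gr_conv_delta: "h \<in> carrier G \<Longrightarrow> gr_conv G (gr_delta h) b = gr_lmult G h b"
proof -
  assume h: "h \<in> carrier G"
  then have S: "{y \<in> carrier G. gr_delta h y \<noteq> 0} = {h}" by (auto simp: gr_delta_def)
  show ?thesis unfolding gr_conv_def gr_lmult_def S by (rule ext) (simp add: gr_delta_def)
qed

lemma gr_conv_delta_diff: assumes h: "h \<in> carrier G"
  shows "gr_conv G (\<lambda>x. gr_delta h x - gr_delta \<one> x) b = (\<lambda>x. gr_lmult G h b x - gr_lmult G \<one> b x)"
proof (cases "h = \<one>")
  case True
  then have S: "{y \<in> carrier G. gr_delta h y - gr_delta \<one> y \<noteq> 0} = {}" by simp
  show ?thesis unfolding gr_conv_def gr_lmult_def S using True by (intro ext) simp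
next
  case False
  then have S: "{y \<in> carrier G. gr_delta h y - gr_delta \<one> y \<noteq> 0} = {h, \<one>}"
    using h by (auto simp: gr_delta_def)
  show ?thesis unfolding gr_conv_def gr_lmult_def S using False h by (intro ext) (simp add: gr_delta_def)
qed

lemma gr_conv_zero: "gr_conv G (\<lambda>x. 0) b = (\<lambda>x. 0)"
  by (auto simp: gr_conv_def)

lemma finite_support_lmult: assumes "finite_support e" "h \<in> carrier G"
  shows "finite_support (gr_lmult G h e)"
proof -
  have "{x. gr_lmult G h e x \<noteq> 0} \<subseteq> (\<lambda>y. h \<otimes> y) ` {x. e x \<noteq> 0}"
  proof
    fix x assume "x \<in> {x. gr_lmult G h e x \<noteq> 0}"
    then have "x \<in> carrier G" "e (inv h \<otimes> x) \<noteq> 0" by (auto simp: gr_lmult_def split: if_splits)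
    moreover have "x = h \<otimes> (inv h \<otimes> x)" using \<open>x \<in> carrier G\<close> assms(2) by (simp add: m_assoc[symmetric])
    ultimately show "x \<in> (\<lambda>y. h \<otimes> y) ` {x. e x \<noteq> 0}" by blast
  qed
  then show ?thesis using assms(1) finite_surj unfolding finite_support_def by blast
qed

end


section \<open>Orderings of a group\<close>

context group
begin

lemma orderingsD:
  assumes "R \<in> orderings G"
  shows "R \<subseteq> carrier G \<times> carrier G" "trans R" "irrefl R" "total_on (carrier G) R"
    "\<And>a x y. a \<in> carrier G \<Longrightarrow> x \<in> carrier G \<Longrightarrow> y \<in> carrier G \<Longrightarrow> (x, y) \<in> R \<Longrightarrow> (a \<otimes> x, a \<otimes> y) \<in> R"
    "\<And>a x y. a \<in> carrier G \<Longrightarrow> x \<in> carrier G \<Longrightarrow> y \<in> carrier G \<Longrightarrow> (x, y) \<in> R \<Longrightarrow> (x \<otimes> a, y \<otimes> a) \<in> R"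
  using assms unfolding orderings_def strict_linear_order_on_def by auto

lemma ordering_less_iff_one_less:
  assumes R: "R \<in> orderings G" and x: "x \<in> carrier G" and y: "y \<in> carrier G"
  shows "(x, y) \<in> R \<longleftrightarrow> (\<one>, inv x \<otimes> y) \<in> R"
proof
  assume "(x, y) \<in> R"
  from orderingsD(5)[OF R _ x y this, of "inv x"] show "(\<one>, inv x \<otimes> y) \<in> R"
    using x by simp
next
  assume "(\<one>, inv x \<otimes> y) \<in> R"
  from orderingsD(5)[OF R x _ _ this] show "(x, y) \<in> R"
    using x y by (simp add: m_assoc[symmetric])
qed

lemma ordering_finite_has_max:
  assumes R: "R \<in> orderings G" and "finite S" "S \<noteq> {}" "S \<subseteq> carrier G"
  shows "\<exists>m\<in>S. \<forall>y\<in>S. y \<noteq> m \<longrightarrow> (y, m) \<in> R"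
  using assms(2-4)
proof (induction S rule: finite_ne_induct)
  case (singleton x)
  then show ?case by simp
next
  case (insert x S)
  then obtain m where m: "m \<in> S" "\<forall>y\<in>S. y \<noteq> m \<longrightarrow> (y, m) \<in> R" by auto
  have "x \<noteq> m" "x \<in> carrier G" "m \<in> carrier G" using insert m by auto
  then consider "(m, x) \<in> R" | "(x, m) \<in> R"
    using orderingsD(4)[OF R] unfolding total_on_def by blast
  then show ?case
  proof cases
    case 1
    have "(y, x) \<in> R" if "y \<in> S" for y
      using m 1 transD[OF orderingsD(2)[OF R]] that by (cases "y = m") auto
    then show ?thesis using \<open>x \<noteq> m\<close> by blast
  next
    case 2
    then show ?thesis using m by blast
  qed
qed

text \<open>Both h m and inv h m lie in the support along with its largest element m, and one of
  them exceeds m.\<close>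
lemma gr_lmult_fixed_imp_zero:
  assumes R: "R \<in> orderings G" and h: "h \<in> carrier G" "h \<noteq> \<one>"
    and e: "finite_support e" "\<And>x. x \<notin> carrier G \<Longrightarrow> e x = 0" and fixed: "gr_lmult G h e = e"
  shows "e = (\<lambda>x. 0)"
proof (rule ccontr)
  assume "e \<noteq> (\<lambda>x. 0)"
  define S where "S = {x. e x \<noteq> 0}"
  have S: "finite S" "S \<noteq> {}" "S \<subseteq> carrier G"
    using e \<open>e \<noteq> (\<lambda>x. 0)\<close> unfolding S_def finite_support_def by auto
  obtain m where m: "m \<in> S" and m_max: "\<And>y. y \<in> S \<Longrightarrow> y \<noteq> m \<Longrightarrow> (y, m) \<in> R"
    using ordering_finite_has_max[OF R S] by blast
  have mG: "m \<in> carrier G" using m S(3) by blast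
  have e_inv: "e (inv h \<otimes> x) = e x" if "x \<in> carrier G" for x
    using fun_cong[OF fixed, of x] that by (simp add: gr_lmult_def)
  have "e (h \<otimes> m) = e m" using e_inv[of "h \<otimes> m"] h mG by (simp add: m_assoc[symmetric])
  then have "h \<otimes> m \<in> S" using m unfolding S_def by simp
  moreover have "h \<otimes> m \<noteq> m" using h mG by simp
  ultimately have up: "(h \<otimes> m, m) \<in> R" by (rule m_max)
  have "inv h \<otimes> m \<in> S" using m e_inv[OF mG] unfolding S_def by simp
  moreover have "inv h \<otimes> m \<noteq> m" using h mG by simp
  ultimately have "(inv h \<otimes> m, m) \<in> R" by (rule m_max)
  from orderingsD(5)[OF R h(1) _ mG this] have down: "(m, h \<otimes> m) \<in> R"
    using h mG by (simp add: m_assoc[symmetric])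
  from transD[OF orderingsD(2)[OF R] up down] show False
    using orderingsD(3)[OF R] by (simp add: irrefl_def)
qed

text \<open>Witness: the quotients inv a b of the pairs a < b in T.\<close>
lemma ordering_restriction_locally_constant:
  assumes R0: "R0 \<in> orderings G" and T: "finite T" "T \<subseteq> carrier G"
  shows "\<exists>S. finite S \<and> S \<subseteq> carrier G \<and> R0 \<in> ord_basic G S \<and>
           (\<forall>R\<in>ord_basic G S. \<forall>a\<in>T. \<forall>b\<in>T. (a, b) \<in> R \<longleftrightarrow> (a, b) \<in> R0)"
proof (intro exI conjI ballI)
  let ?S = "{inv a \<otimes> b | a b. a \<in> T \<and> b \<in> T \<and> (a, b) \<in> R0}"
  have "?S \<subseteq> (\<lambda>(a, b). inv a \<otimes> b) ` (T \<times> T)" by auto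
  then show "finite ?S" by (rule finite_subset) (simp add: T(1))
  show "?S \<subseteq> carrier G" using T(2) by auto
  show "R0 \<in> ord_basic G ?S" unfolding ord_basic_def using R0 ordering_less_iff_one_less[OF R0] T(2) by auto
  fix R a b assume R: "R \<in> ord_basic G ?S" and ab: "a \<in> T" "b \<in> T"
  then have RO: "R \<in> orderings G" and R1: "\<And>x. x \<in> ?S \<Longrightarrow> (\<one>, x) \<in> R"
    unfolding ord_basic_def by auto
  have agree: "(a, b) \<in> R" if "(a, b) \<in> R0" "a \<in> T" "b \<in> T" for a b
    using R1[of "inv a \<otimes> b"] ordering_less_iff_one_less[OF RO, of a b] that T(2) by blast
  show "(a, b) \<in> R \<longleftrightarrow> (a, b) \<in> R0"
  proof
    assume r: "(a, b) \<in> R"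
    show "(a, b) \<in> R0"
    proof (rule ccontr)
      assume "(a, b) \<notin> R0"
      moreover have "a \<noteq> b" using r orderingsD(3)[OF RO] by (auto simp: irrefl_def)
      ultimately have "(b, a) \<in> R0" using ab orderingsD(4)[OF R0] T(2) by (auto simp: total_on_def)
      then have "(b, a) \<in> R" using agree ab by blast
      then show False using r orderingsD(2,3)[OF RO] by (auto dest: transD simp: irrefl_def)
    qed
  qed (rule agree[OF _ ab])
qed

end

lemma Union_ord_basic: "\<Union>{ord_basic H S | S. finite S \<and> S \<subseteq> carrier H} = orderings H"
proof
  have "ord_basic H {} = orderings H" by (simp add: ord_basic_def)
  then show "orderings H \<subseteq> \<Union>{ord_basic H S | S. finite S \<and> S \<subseteq> carrier H}" by blast
qed (auto simp: ord_basic_def)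

lemma topspace_ord_topology: "topspace (ord_topology H) = orderings H"
  unfolding ord_topology_def topology_generated_by_topspace by (rule Union_ord_basic)

lemma openin_ord_basic: "finite S \<Longrightarrow> S \<subseteq> carrier H \<Longrightarrow> openin (ord_topology H) (ord_basic H S)"
  unfolding ord_topology_def by (rule topology_generated_by_Basis) blast


section \<open>The matrices rho(w)\<close>

definition pmat_diff :: "'g pmat \<Rightarrow> 'g pmat \<Rightarrow> 'g pmat" where
  "pmat_diff M N = (\<lambda>i j n x. M i j n x - N i j n x)"

lemma case_filter_first_iff:
  "(case filter P xs of [] \<Rightarrow> False | x # _ \<Rightarrow> Q x) \<longleftrightarrow>
     (\<exists>q<length xs. P (xs ! q) \<and> (\<forall>q'<q. \<not> P (xs ! q')) \<and> Q (xs ! q))"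
  by (induction xs) (auto simp: Ex_less_Suc2 All_less_Suc2)

lemma length_positions: "length positions = 4"
  by (simp add: positions_def)

lemma set_positions: "set positions = {(i, j). i < 2 \<and> j < 2}"
  by (auto simp: positions_def less_2_cases_iff)

lemma positions_less_2: "q < 4 \<Longrightarrow> fst (positions ! q) < 2 \<and> snd (positions ! q) < 2"
  using nth_mem[of q positions] by (simp add: length_positions set_positions mem_Times_iff)

lemma sum_atMost_supported_01:
  fixes c :: "nat \<Rightarrow> int"
  assumes "\<And>m. 2 \<le> m \<Longrightarrow> c m = 0"
  shows "(\<Sum>m\<le>n. c m) = c 0 + (if n = 0 then 0 else c 1)"
  using assms
proof (induction n)
  case (Suc n)
  then show ?case by (cases n) auto
qed simp

lemma free_product_simps:
  "carrier (free_product F G) = {w. fp_reduced F G w}"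
  "x \<otimes>\<^bsub>free_product F G\<^esub> y = foldr (fp_cons F G) x y"
  "\<one>\<^bsub>free_product F G\<^esub> = []"
  by (simp_all add: free_product_def)

lemma fp_reduced_Cons:
  "fp_reduced F G (l # w) \<longleftrightarrow> fp_valid F G l \<and> fp_reduced F G w \<and> (w = [] \<or> isl l \<noteq> isl (hd w))"
  by (cases w) auto

locale group_pair = F: group F + G: group G
  for F :: "('a, 'c) monoid_scheme" and G :: "('b, 'd) monoid_scheme"
begin

abbreviation K :: "('a \<times> 'b) monoid" where "K \<equiv> F \<times>\<times> G"

sublocale K: group K
  by (rule DirProd_group) (rule F.is_group, rule G.is_group)

declare carrier_DirProd [simp del]

lemma mem_carrier_K [simp]: "(a, b) \<in> carrier K \<longleftrightarrow> a \<in> carrier F \<and> b \<in> carrier G"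
  by (simp add: carrier_DirProd)

fun letter_closed :: "'a + 'b \<Rightarrow> bool" where
  "letter_closed (Inl f) \<longleftrightarrow> f \<in> carrier F"
| "letter_closed (Inr g) \<longleftrightarrow> g \<in> carrier G"

lemma fp_reduced_fp_cons: "fp_valid F G l \<Longrightarrow> fp_reduced F G w \<Longrightarrow> fp_reduced F G (fp_cons F G l w)"
  by (cases w; cases l; cases "hd w") (auto simp: fp_reduced_Cons)

lemma fp_reduced_letters_valid: "fp_reduced F G w \<Longrightarrow> list_all (fp_valid F G) w"
  by (induction w) (auto simp: fp_reduced_Cons)

lemma fp_reduced_mult:
  "list_all (fp_valid F G) x \<Longrightarrow> fp_reduced F G y \<Longrightarrow> fp_reduced F G (x \<otimes>\<^bsub>free_product F G\<^esub> y)"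
  by (induction x) (auto simp: free_product_def intro: fp_reduced_fp_cons)

lemma fp_valid_letter_closed: "fp_valid F G l \<Longrightarrow> letter_closed l"
  by (cases l) auto

lemma fp_reduced_letters_closed: "fp_reduced F G w \<Longrightarrow> list_all letter_closed w"
  by (induction w) (auto simp: fp_reduced_Cons fp_valid_letter_closed)

text \<open>pmat_one restricted to the 2x2 block, to which all products rho(l) M are confined.\<close>
definition id_mat :: "('a \<times> 'b) pmat" where
  "id_mat = (\<lambda>i j n. if i = j \<and> i < 2 \<and> n = 0 then gr_delta \<one>\<^bsub>K\<^esub> else (\<lambda>x. 0))"

fun rho_lmult :: "'a + 'b \<Rightarrow> ('a \<times> 'b) pmat \<Rightarrow> ('a \<times> 'b) pmat" where
  "rho_lmult (Inl f) M = (\<lambda>i j n.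
     if i = 0 then (\<lambda>x. gr_lmult K (f, \<one>\<^bsub>G\<^esub>) (M 0 j n) x +
       (if n = 0 then 0 else gr_lmult K (f, \<one>\<^bsub>G\<^esub>) (M 1 j (n - 1)) x - gr_lmult K \<one>\<^bsub>K\<^esub> (M 1 j (n - 1)) x))
     else if i = 1 then gr_lmult K \<one>\<^bsub>K\<^esub> (M 1 j n) else (\<lambda>x. 0))"
| "rho_lmult (Inr g) M = (\<lambda>i j n.
     if i = 0 then gr_lmult K \<one>\<^bsub>K\<^esub> (M 0 j n)
     else if i = 1 then (\<lambda>x. gr_lmult K (\<one>\<^bsub>F\<^esub>, g) (M 1 j n) x +
       (if n = 0 then 0 else gr_lmult K (\<one>\<^bsub>F\<^esub>, g) (M 0 j (n - 1)) x - gr_lmult K \<one>\<^bsub>K\<^esub> (M 0 j (n - 1)) x))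
     else (\<lambda>x. 0))"

text \<open>M rho(l), written out. In place of associativity of the matrix product only two facts
  about it are used: it commutes with rho_lmult, and rho_lmult l id_mat = rho_rmult id_mat l.\<close>
fun rho_rmult :: "('a \<times> 'b) pmat \<Rightarrow> 'a + 'b \<Rightarrow> ('a \<times> 'b) pmat" where
  "rho_rmult M (Inl f) = (\<lambda>i j n.
     if j = 0 then gr_rmult K (f, \<one>\<^bsub>G\<^esub>) (M i 0 n)
     else if j = 1 then (\<lambda>x. gr_rmult K \<one>\<^bsub>K\<^esub> (M i 1 n) x +
       (if n = 0 then 0 else gr_rmult K (f, \<one>\<^bsub>G\<^esub>) (M i 0 (n - 1)) x - gr_rmult K \<one>\<^bsub>K\<^esub> (M i 0 (n - 1)) x))
     else (\<lambda>x. 0))"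
| "rho_rmult M (Inr g) = (\<lambda>i j n.
     if j = 0 then (\<lambda>x. gr_rmult K \<one>\<^bsub>K\<^esub> (M i 0 n) x +
       (if n = 0 then 0 else gr_rmult K (\<one>\<^bsub>F\<^esub>, g) (M i 1 (n - 1)) x - gr_rmult K \<one>\<^bsub>K\<^esub> (M i 1 (n - 1)) x))
     else if j = 1 then gr_rmult K (\<one>\<^bsub>F\<^esub>, g) (M i 1 n) else (\<lambda>x. 0))"

lemma pmat_mult_rho_letter:
  assumes "letter_closed l"
  shows "pmat_mult K (rho_letter F G l) M = rho_lmult l M"
proof -
  have dd: "gr_conv K (\<lambda>x. gr_delta h x - gr_delta (\<one>\<^bsub>F\<^esub>, \<one>\<^bsub>G\<^esub>) x) b
      = (\<lambda>x. gr_lmult K h b x - gr_lmult K \<one>\<^bsub>K\<^esub> b x)" if "h \<in> carrier K" for h b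
    using K.gr_conv_delta_diff[OF that] by simp
  show ?thesis
    using assms unfolding pmat_mult_def
    by (cases l; intro ext; subst sum_atMost_supported_01)
       (simp_all add: numeral_2_eq_2 K.gr_conv_zero K.gr_conv_delta dd)
qed

definition proper :: "('a \<times> 'b) pmat \<Rightarrow> bool" where
  "proper M \<longleftrightarrow> (\<forall>i j n x. (x \<notin> carrier K \<or> 2 \<le> i \<or> 2 \<le> j) \<longrightarrow> M i j n x = 0) \<and>
     (\<forall>i j n. finite_support (M i j n))"

lemma properD:
  "proper M \<Longrightarrow> x \<notin> carrier K \<Longrightarrow> M i j n x = 0"
  "proper M \<Longrightarrow> 2 \<le> i \<Longrightarrow> M i j n = (\<lambda>x. 0)"
  "proper M \<Longrightarrow> 2 \<le> j \<Longrightarrow> M i j n = (\<lambda>x. 0)"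
  "proper M \<Longrightarrow> finite_support (M i j n)"
  unfolding proper_def by blast+

lemma proper_gr_lmult_one: "proper M \<Longrightarrow> gr_lmult K (\<one>\<^bsub>F\<^esub>, \<one>\<^bsub>G\<^esub>) (M i j n) = M i j n"
  using K.gr_lmult_one[of "M i j n"] properD(1)[of M] by simp

lemma proper_id_mat: "proper id_mat"
  unfolding proper_def id_mat_def by (auto simp: gr_delta_def finite_support_def)

lemma proper_rho_lmult: assumes "proper M" "letter_closed l" shows "proper (rho_lmult l M)"
proof -
  have "rho_lmult l M i j n x = 0" if "x \<notin> carrier K \<or> 2 \<le> i \<or> 2 \<le> j" for i j n x
    using that assms by (cases l) (auto simp: properD gr_mult_linear)
  moreover have "finite_support (rho_lmult l M i j n)" for i j n
    using assms by (cases l) (auto simp: finite_support_zero properD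
        intro!: finite_support_add finite_support_diff finite_support_if0 K.finite_support_lmult)
  ultimately show ?thesis unfolding proper_def by blast
qed

lemma rho_lmult_Inl_Inl: "f \<in> carrier F \<Longrightarrow> f' \<in> carrier F \<Longrightarrow>
    rho_lmult (Inl f) (rho_lmult (Inl f') M) = rho_lmult (Inl (f \<otimes>\<^bsub>F\<^esub> f')) M"
  and rho_lmult_Inr_Inr: "g \<in> carrier G \<Longrightarrow> g' \<in> carrier G \<Longrightarrow>
    rho_lmult (Inr g) (rho_lmult (Inr g') M) = rho_lmult (Inr (g \<otimes>\<^bsub>G\<^esub> g')) M"
  by (intro ext; simp add: gr_mult_linear K.gr_lmult_lmult)+

lemma rho_lmult_one:
  "proper M \<Longrightarrow> rho_lmult (Inl \<one>\<^bsub>F\<^esub>) M = M"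
  "proper M \<Longrightarrow> rho_lmult (Inr \<one>\<^bsub>G\<^esub>) M = M"
  by (intro ext; auto simp: proper_gr_lmult_one properD)+

lemma rho_lmult_rmult_commute:
  "letter_closed l \<Longrightarrow> letter_closed r \<Longrightarrow> rho_lmult l (rho_rmult M r) = rho_rmult (rho_lmult l M) r"
  by (cases l; cases r; intro ext) (simp_all add: gr_mult_linear K.gr_lmult_rmult)

lemma rho_lmult_id_mat: "letter_closed l \<Longrightarrow> rho_lmult l id_mat = rho_rmult id_mat l"
proof -
  have "gr_lmult K h (gr_delta (\<one>\<^bsub>F\<^esub>, \<one>\<^bsub>G\<^esub>)) = gr_rmult K h (gr_delta (\<one>\<^bsub>F\<^esub>, \<one>\<^bsub>G\<^esub>))"
    if "h \<in> carrier K" for h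
    using K.gr_lmult_delta[OF that] K.gr_rmult_delta[OF that] by simp
  then show "letter_closed l \<Longrightarrow> ?thesis"
    by (cases l; intro ext) (auto simp: id_mat_def gr_mult_linear)
qed

lemma rho_mult_diff:
  "rho_lmult l (pmat_diff M N) = pmat_diff (rho_lmult l M) (rho_lmult l N)"
  "rho_rmult (pmat_diff M N) l = pmat_diff (rho_rmult M l) (rho_rmult N l)"
  by (cases l; intro ext; simp add: pmat_diff_def gr_mult_linear)+

lemma proper_pmat_diff: "proper M \<Longrightarrow> proper N \<Longrightarrow> proper (pmat_diff M N)"
  unfolding proper_def pmat_diff_def by (auto intro: finite_support_diff)

fun letter_index :: "'a + 'b \<Rightarrow> nat" where
  "letter_index (Inl f) = 0"
| "letter_index (Inr g) = 1"

fun letter_elem :: "'a + 'b \<Rightarrow> 'a \<times> 'b" where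
  "letter_elem (Inl f) = (f, \<one>\<^bsub>G\<^esub>)"
| "letter_elem (Inr g) = (\<one>\<^bsub>F\<^esub>, g)"

lemma letter_elem_closed: "letter_closed l \<Longrightarrow> letter_elem l \<in> carrier K"
  by (cases l) auto

lemma rho_lmult_rows:
  "rho_lmult l M (letter_index l) j n = (\<lambda>x. gr_lmult K (letter_elem l) (M (letter_index l) j n) x +
     (if n = 0 then 0 else gr_lmult K (letter_elem l) (M (1 - letter_index l) j (n - 1)) x
        - gr_lmult K \<one>\<^bsub>K\<^esub> (M (1 - letter_index l) j (n - 1)) x))"
  "rho_lmult l M (1 - letter_index l) j n = gr_lmult K \<one>\<^bsub>K\<^esub> (M (1 - letter_index l) j n)"
  by (cases l, simp_all cong: if_cong)+

definition letter_factor :: "'a + 'b \<Rightarrow> nat \<Rightarrow> 'a \<times> 'b" where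
  "letter_factor l i = (if i = letter_index l then letter_elem l else \<one>\<^bsub>K\<^esub>)"

lemma letter_factor_simps [simp]:
  "letter_factor (Inl f) i = (if i = 0 then (f, \<one>\<^bsub>G\<^esub>) else \<one>\<^bsub>K\<^esub>)"
  "letter_factor (Inr g) i = (if i = 1 then (\<one>\<^bsub>F\<^esub>, g) else \<one>\<^bsub>K\<^esub>)"
  by (simp_all add: letter_factor_def)

lemma letter_factor_closed: "letter_closed l \<Longrightarrow> letter_factor l i \<in> carrier K"
  by (simp add: letter_factor_def letter_elem_closed)

abbreviation vanishes_below :: "('a \<times> 'b) pmat \<Rightarrow> nat \<Rightarrow> bool" where
  "vanishes_below M n \<equiv> \<forall>i<2. \<forall>j<2. \<forall>n'<n. \<forall>k\<in>carrier K. M i j n' k = 0"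

lemma rho_lmult_lowest_degree:
  assumes "letter_closed l" "vanishes_below M n"
  shows "vanishes_below (rho_lmult l M) n"
    and "i < 2 \<Longrightarrow> j < 2 \<Longrightarrow> k \<in> carrier K \<Longrightarrow>
      rho_lmult l M i j n k = M i j n (inv\<^bsub>K\<^esub> (letter_factor l i) \<otimes>\<^bsub>K\<^esub> k)"
  using assms by (cases l; force simp: gr_lmult_def less_2_cases_iff)+

lemma rho_rmult_lowest_degree:
  assumes "letter_closed l" "vanishes_below M n"
  shows "vanishes_below (rho_rmult M l) n"
    and "i < 2 \<Longrightarrow> j < 2 \<Longrightarrow> k \<in> carrier K \<Longrightarrow>
      rho_rmult M l i j n k = M i j n (k \<otimes>\<^bsub>K\<^esub> inv\<^bsub>K\<^esub> (letter_factor l j))"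
  using assms by (cases l; force simp: gr_rmult_def less_2_cases_iff)+

definition rho_word :: "('a + 'b) list \<Rightarrow> ('a \<times> 'b) pmat" where
  "rho_word w = foldr rho_lmult w id_mat"

lemma proper_foldr_rho_lmult: "proper M \<Longrightarrow> list_all letter_closed w \<Longrightarrow> proper (foldr rho_lmult w M)"
  by (induction w) (auto intro: proper_rho_lmult)

lemma proper_rho_word: "list_all letter_closed w \<Longrightarrow> proper (rho_word w)"
  unfolding rho_word_def by (rule proper_foldr_rho_lmult[OF proper_id_mat])

lemma rho_eq_rho_word:
  assumes "list_all letter_closed w" "i < 2" "j < 2"
  shows "rho F G w i j = rho_word w i j"
  using assms
proof (induction w arbitrary: i j)
  case Nil
  then show ?case by (auto simp: rho_def rho_word_def pmat_one_def id_mat_def)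
next
  case (Cons l w)
  have "rho F G (l # w) = rho_lmult l (rho F G w)"
    using Cons.prems by (simp add: rho_def pmat_mult_rho_letter)
  moreover have "rho F G w 0 j = rho_word w 0 j" "rho F G w 1 j = rho_word w 1 j"
    using Cons by auto
  moreover have "rho_word (l # w) = rho_lmult l (rho_word w)" by (simp add: rho_word_def)
  ultimately show ?case by (cases l) (simp_all only: rho_lmult.simps)
qed

lemma foldr_rho_lmult_foldl_rho_rmult:
  "list_all letter_closed x \<Longrightarrow> list_all letter_closed a \<Longrightarrow>
     foldr rho_lmult x (foldl rho_rmult M a) = foldl rho_rmult (foldr rho_lmult x M) a"
proof (induction x)
  case (Cons l x)
  have "rho_lmult l (foldl rho_rmult N a) = foldl rho_rmult (rho_lmult l N) a" for N
    using Cons.prems by (induction a arbitrary: N) (auto simp: rho_lmult_rmult_commute)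
  then show ?case using Cons by simp
qed simp

lemma rho_word_foldl: "list_all letter_closed a \<Longrightarrow> rho_word a = foldl rho_rmult id_mat a"
proof (induction a)
  case (Cons l a)
  have "rho_word (l # a) = rho_lmult l (foldl rho_rmult id_mat a)"
    using Cons by (simp add: rho_word_def)
  also have "\<dots> = foldl rho_rmult (rho_lmult l id_mat) a"
    using foldr_rho_lmult_foldl_rho_rmult[of "[l]" a id_mat] Cons.prems by simp
  finally show ?case using Cons.prems by (simp add: rho_lmult_id_mat)
qed (simp add: rho_word_def)

lemma rho_word_fp_cons:
  assumes "letter_closed l" "list_all letter_closed w"
  shows "rho_word (fp_cons F G l w) = rho_lmult l (rho_word w)"
proof (cases w)
  case (Cons a w')
  have w': "list_all letter_closed w'" "letter_closed a" using assms Cons by auto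
  show ?thesis
  proof (cases l; cases a)
    fix f f' assume l: "l = Inl f" and a: "a = Inl f'"
    then have "f \<in> carrier F" "f' \<in> carrier F" using assms w' by auto
    then have "rho_lmult l (rho_word w) = rho_lmult (Inl (f \<otimes>\<^bsub>F\<^esub> f')) (rho_word w')"
      by (simp add: l a Cons rho_word_def rho_lmult_Inl_Inl del: rho_lmult.simps)
    then show ?thesis
      using rho_lmult_one(1)[OF proper_rho_word[OF w'(1)]]
      by (cases "f \<otimes>\<^bsub>F\<^esub> f' = \<one>\<^bsub>F\<^esub>") (simp_all add: l a Cons rho_word_def del: rho_lmult.simps)
  next
    fix g g' assume l: "l = Inr g" and a: "a = Inr g'"
    then have "g \<in> carrier G" "g' \<in> carrier G" using assms w' by auto
    then have "rho_lmult l (rho_word w) = rho_lmult (Inr (g \<otimes>\<^bsub>G\<^esub> g')) (rho_word w')"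
      by (simp add: l a Cons rho_word_def rho_lmult_Inr_Inr del: rho_lmult.simps)
    then show ?thesis
      using rho_lmult_one(2)[OF proper_rho_word[OF w'(1)]]
      by (cases "g \<otimes>\<^bsub>G\<^esub> g' = \<one>\<^bsub>G\<^esub>") (simp_all add: l a Cons rho_word_def del: rho_lmult.simps)
  qed (simp_all add: Cons rho_word_def)
qed (cases l; simp add: rho_word_def)

lemma rho_word_mult_left:
  assumes "list_all (fp_valid F G) x" "fp_reduced F G y"
  shows "rho_word (x \<otimes>\<^bsub>free_product F G\<^esub> y) = foldr rho_lmult x (rho_word y)"
  using assms
proof (induction x)
  case (Cons l x)
  then show ?case
    using fp_reduced_mult[OF Cons.prems(1)[THEN list.pred_inject(2)[THEN iffD1, THEN conjunct2]] Cons.prems(2)]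
    by (simp add: free_product_simps rho_word_fp_cons fp_valid_letter_closed fp_reduced_letters_closed)
qed (simp add: free_product_simps)

lemma rho_word_mult_right:
  assumes "fp_reduced F G x" "fp_reduced F G y"
  shows "rho_word (x \<otimes>\<^bsub>free_product F G\<^esub> y) = foldl rho_rmult (rho_word x) y"
proof -
  have "rho_word (x \<otimes>\<^bsub>free_product F G\<^esub> y) = foldr rho_lmult x (foldl rho_rmult id_mat y)"
    using assms by (simp add: rho_word_mult_left fp_reduced_letters_valid rho_word_foldl fp_reduced_letters_closed)
  also have "\<dots> = foldl rho_rmult (rho_word x) y"
    using assms by (simp add: foldr_rho_lmult_foldl_rho_rmult fp_reduced_letters_closed rho_word_def)
  finally show ?thesis .
qed

fun letter_inv :: "'a + 'b \<Rightarrow> 'a + 'b" where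
  "letter_inv (Inl f) = Inl (inv\<^bsub>F\<^esub> f)"
| "letter_inv (Inr g) = Inr (inv\<^bsub>G\<^esub> g)"

lemma fp_valid_letter_inv: "fp_valid F G l \<Longrightarrow> fp_valid F G (letter_inv l)"
  by (cases l) auto

lemma rho_lmult_letter_inv:
  "proper M \<Longrightarrow> letter_closed l \<Longrightarrow> rho_lmult (letter_inv l) (rho_lmult l M) = M"
  by (cases l) (simp_all add: rho_lmult_Inl_Inl rho_lmult_Inr_Inr rho_lmult_one del: rho_lmult.simps)

lemma foldr_rho_lmult_inv:
  "proper M \<Longrightarrow> list_all letter_closed x \<Longrightarrow>
     foldr rho_lmult (rev (map letter_inv x)) (foldr rho_lmult x M) = M"
  by (induction x) (simp_all add: rho_lmult_letter_inv proper_foldr_rho_lmult)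

lemma fp_cons_reduced:
  "fp_valid F G l \<Longrightarrow> fp_reduced F G w \<Longrightarrow> w = [] \<or> isl l \<noteq> isl (hd w) \<Longrightarrow> fp_cons F G l w = l # w"
  by (cases l; cases w; cases "hd w") auto

lemma fp_cons_letter_inv:
  assumes "fp_valid F G l" "fp_reduced F G w"
  shows "fp_cons F G l (fp_cons F G (letter_inv l) w) = w"
  using assms
  by (cases l; cases w; cases "hd w")
     (auto simp: fp_reduced_Cons fp_cons_reduced F.m_assoc[symmetric] G.m_assoc[symmetric]
        F.inv_solve_left' G.inv_solve_left')

lemma fp_mult_inv_cancel:
  "list_all (fp_valid F G) x \<Longrightarrow> fp_reduced F G y \<Longrightarrow>
     foldr (fp_cons F G) x (foldr (fp_cons F G) (rev (map letter_inv x)) y) = y"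
  by (induction x arbitrary: y) (simp_all add: fp_cons_letter_inv fp_valid_letter_inv fp_reduced_fp_cons)

lemma fp_mult_Nil: "fp_reduced F G x \<Longrightarrow> foldr (fp_cons F G) x [] = x"
proof (induction x)
  case (Cons l x)
  then show ?case by (simp add: fp_reduced_Cons fp_cons_reduced)
qed simp

lemma foldr_rho_lmult_diff:
  "foldr rho_lmult x (pmat_diff M N) = pmat_diff (foldr rho_lmult x M) (foldr rho_lmult x N)"
  by (induction x) (simp_all add: rho_mult_diff)

lemma foldl_rho_rmult_diff:
  "foldl rho_rmult (pmat_diff M N) x = pmat_diff (foldl rho_rmult M x) (foldl rho_rmult N x)"
  by (induction x arbitrary: M N) (simp_all add: rho_mult_diff)

definition fp_letter :: "'a + 'b \<Rightarrow> ('a + 'b) list" where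
  "fp_letter l = (if fp_valid F G l then [l] else [])"

lemma fp_reduced_fp_letter: "fp_reduced F G (fp_letter l)"
  by (simp add: fp_letter_def)

lemma rho_word_fp_letter: "letter_closed l \<Longrightarrow> rho_word (fp_letter l) = rho_lmult l id_mat"
  by (cases l) (auto simp: fp_letter_def rho_word_def rho_lmult_one proper_id_mat simp del: rho_lmult.simps)

lemma rho_lmult_id_mat_degree_0:
  assumes "letter_closed l"
  shows "rho_lmult l id_mat i j 0 = (if i = j \<and> i < 2 then gr_delta (letter_factor l i) else (\<lambda>x. 0))"
proof -
  have "gr_lmult K h (gr_delta (\<one>\<^bsub>F\<^esub>, \<one>\<^bsub>G\<^esub>)) = gr_delta h" if "h \<in> carrier K" for h
    using K.gr_lmult_delta[OF that] by simp
  then show ?thesis using assms by (cases l) (auto simp: id_mat_def gr_mult_linear)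
qed

lemma rho_word_degree_bound:
  "list_all letter_closed w \<Longrightarrow> length w < n \<Longrightarrow> rho_word w i j n = (\<lambda>x. 0)"
proof (induction w arbitrary: i j n)
  case Nil
  then show ?case by (simp add: rho_word_def id_mat_def)
next
  case (Cons l w)
  then have "rho_word w i' j' n = (\<lambda>x. 0)" "rho_word w i' j' (n - 1) = (\<lambda>x. 0)" for i' j'
    by simp_all
  then show ?case using Cons.prems by (cases l) (simp_all add: rho_word_def gr_mult_linear)
qed


end

section \<open>Positive matrices\<close>

locale ordered_group_pair = group_pair F G
  for F :: "('a, 'c) monoid_scheme" and G :: "('b, 'd) monoid_scheme" +
  fixes LF :: "'a rel" and LG :: "'b rel"
  assumes LF: "LF \<in> orderings F" and LG: "LG \<in> orderings G"
begin

abbreviation lx :: "('a \<times> 'b) rel" where "lx \<equiv> lex_ord LF LG"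

lemma lx_iff: "((a1, a2), (b1, b2)) \<in> lx \<longleftrightarrow> (a1, b1) \<in> LF \<or> (a1 = b1 \<and> (a2, b2) \<in> LG)"
  by (simp add: lex_ord_def)

lemma LF_irrefl: "(x, x) \<notin> LF" and LG_irrefl: "(y, y) \<notin> LG"
  using F.orderingsD(3)[OF LF] G.orderingsD(3)[OF LG] by (simp_all add: irrefl_def)

lemma LF_trans: "(x, y) \<in> LF \<Longrightarrow> (y, z) \<in> LF \<Longrightarrow> (x, z) \<in> LF"
  and LG_trans: "(u, v) \<in> LG \<Longrightarrow> (v, w) \<in> LG \<Longrightarrow> (u, w) \<in> LG"
  using transD[OF F.orderingsD(2)[OF LF]] transD[OF G.orderingsD(2)[OF LG]] by blast+

lemma LF_total: "x \<in> carrier F \<Longrightarrow> y \<in> carrier F \<Longrightarrow> x \<noteq> y \<Longrightarrow> (x, y) \<in> LF \<or> (y, x) \<in> LF"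
  and LG_total: "u \<in> carrier G \<Longrightarrow> v \<in> carrier G \<Longrightarrow> u \<noteq> v \<Longrightarrow> (u, v) \<in> LG \<or> (v, u) \<in> LG"
  using F.orderingsD(4)[OF LF] G.orderingsD(4)[OF LG] unfolding total_on_def by blast+

lemma lx_irrefl: "(a, a) \<notin> lx"
  by (cases a) (simp add: lx_iff LF_irrefl LG_irrefl)

lemma lx_trans: "(a, b) \<in> lx \<Longrightarrow> (b, c) \<in> lx \<Longrightarrow> (a, c) \<in> lx"
  by (cases a; cases b; cases c) (auto simp: lx_iff intro: LF_trans LG_trans)

lemma lx_asym: "(a, b) \<in> lx \<Longrightarrow> (b, a) \<notin> lx"
  using lx_trans lx_irrefl by blast

lemma lx_total: "a \<in> carrier K \<Longrightarrow> b \<in> carrier K \<Longrightarrow> a \<noteq> b \<Longrightarrow> (a, b) \<in> lx \<or> (b, a) \<in> lx"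
  by (cases a; cases b) (auto simp: lx_iff dest: LF_total LG_total)

lemma lex_ordering: "lx \<inter> carrier K \<times> carrier K \<in> orderings K"
proof -
  have "(k \<otimes>\<^bsub>K\<^esub> a, k \<otimes>\<^bsub>K\<^esub> b) \<in> lx \<and> (a \<otimes>\<^bsub>K\<^esub> k, b \<otimes>\<^bsub>K\<^esub> k) \<in> lx"
    if "k \<in> carrier K" "a \<in> carrier K" "b \<in> carrier K" "(a, b) \<in> lx" for k a b
    using that by (cases a; cases b; cases k)
      (auto simp: lx_iff intro: F.orderingsD(5,6)[OF LF] G.orderingsD(5,6)[OF LG])
  moreover have "strict_linear_order_on (carrier K) (lx \<inter> carrier K \<times> carrier K)"
    unfolding strict_linear_order_on_def trans_def irrefl_def total_on_def
    using lx_trans lx_irrefl lx_total by blast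
  ultimately show ?thesis unfolding orderings_def by blast
qed

lemma lx_translate:
  assumes "k \<in> carrier K" "a \<in> carrier K" "b \<in> carrier K" "(a, b) \<in> lx"
  shows "(k \<otimes>\<^bsub>K\<^esub> a, k \<otimes>\<^bsub>K\<^esub> b) \<in> lx" "(a \<otimes>\<^bsub>K\<^esub> k, b \<otimes>\<^bsub>K\<^esub> k) \<in> lx"
  using K.orderingsD(5,6)[OF lex_ordering] assms by auto

definition coeff :: "('a \<times> 'b) pmat \<Rightarrow> nat \<times> nat \<times> ('a \<times> 'b) \<Rightarrow> int" where
  "coeff M = (\<lambda>(n, q, k). M (fst (positions ! q)) (snd (positions ! q)) n k)"

abbreviation indices :: "(nat \<times> nat \<times> ('a \<times> 'b)) set" where
  "indices \<equiv> UNIV \<times> {..<4} \<times> carrier K"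

text \<open>The coefficient indices (degree, matrix position, group element) in order of decreasing
  significance for pmat_pos: lowest degree first, then positions, then the largest group element.\<close>
definition precedes :: "nat \<times> nat \<times> ('a \<times> 'b) \<Rightarrow> nat \<times> nat \<times> ('a \<times> 'b) \<Rightarrow> bool" where
  "precedes = (\<lambda>(n', q', k') (n, q, k). n' < n \<or> (n' = n \<and> q' < q) \<or> (n' = n \<and> q' = q \<and> (k, k') \<in> lx))"

lemma precedes_trans: "precedes a b \<Longrightarrow> precedes b c \<Longrightarrow> precedes a c"
  unfolding precedes_def by (auto intro: lx_trans split: prod.splits)

lemma precedes_total: "a \<in> indices \<Longrightarrow> b \<in> indices \<Longrightarrow> a \<noteq> b \<Longrightarrow> precedes a b \<or> precedes b a"
  unfolding precedes_def using lx_total by (auto split: prod.splits)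

definition leading :: "('a \<times> 'b) pmat \<Rightarrow> nat \<times> nat \<times> ('a \<times> 'b) \<Rightarrow> bool" where
  "leading M c \<longleftrightarrow> c \<in> indices \<and> coeff M c \<noteq> 0 \<and> (\<forall>d\<in>indices. precedes d c \<longrightarrow> coeff M d = 0)"

lemma leading_unique: "leading M c \<Longrightarrow> leading M d \<Longrightarrow> c = d"
  using precedes_total[of c d] unfolding leading_def by blast

definition nonzero_at :: "('a \<times> 'b) pmat \<Rightarrow> nat \<Rightarrow> nat \<Rightarrow> bool" where
  "nonzero_at M n q \<longleftrightarrow> (\<exists>k\<in>carrier K. coeff M (n, q, k) \<noteq> 0)"

lemma pmat_pos_unfold:
  "pmat_pos F G LF LG M \<longleftrightarrow> (\<exists>n q. q < 4 \<and>
     (\<forall>n'<n. \<forall>q'<4. \<not> nonzero_at M n' q') \<and> (\<forall>q'<q. \<not> nonzero_at M n q') \<and>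
     (\<exists>m\<in>carrier K. 0 < coeff M (n, q, m) \<and>
        (\<forall>k\<in>carrier K. coeff M (n, q, k) \<noteq> 0 \<longrightarrow> k \<noteq> m \<longrightarrow> (k, m) \<in> lx)))"
proof -
  define top where "top n q \<longleftrightarrow> (\<exists>m\<in>carrier K. 0 < coeff M (n, q, m) \<and>
      (\<forall>k\<in>carrier K. coeff M (n, q, k) \<noteq> 0 \<longrightarrow> k \<noteq> m \<longrightarrow> (k, m) \<in> lx))" for n q
  have positions_iff: "(\<exists>(i, j)\<in>set positions. P i j) \<longleftrightarrow> (\<exists>q<4. P (fst (positions ! q)) (snd (positions ! q)))"
    "(\<forall>(i, j)\<in>set positions. P i j) \<longleftrightarrow> (\<forall>q<4. P (fst (positions ! q)) (snd (positions ! q)))" for P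
    by (simp_all only: Bex_set_list_ex Ball_set_list_all list_ex_length list_all_length
        length_positions case_prod_beta)
  have "gr_nonzero F G (M (fst (positions ! q)) (snd (positions ! q)) n) \<longleftrightarrow> nonzero_at M n q" for n q
    by (auto simp: nonzero_at_def gr_nonzero_def coeff_def carrier_DirProd)
  moreover have "gr_pos F G LF LG (M (fst (positions ! q)) (snd (positions ! q)) n) \<longleftrightarrow> top n q" for n q
    by (auto simp: top_def gr_pos_def coeff_def carrier_DirProd)
  ultimately have "pmat_pos F G LF LG M \<longleftrightarrow> (\<exists>n. (\<exists>q<4. nonzero_at M n q) \<and>
      (\<forall>n'<n. \<forall>q<4. \<not> nonzero_at M n' q) \<and>
      (\<exists>q<4. nonzero_at M n q \<and> (\<forall>q'<q. \<not> nonzero_at M n q') \<and> top n q))"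
    unfolding pmat_pos_def case_filter_first_iff positions_iff by (simp add: case_prod_beta length_positions)
  moreover have "top n q \<Longrightarrow> nonzero_at M n q" for n q
    unfolding top_def nonzero_at_def by (metis order_less_irrefl)
  ultimately show ?thesis unfolding top_def[symmetric] by blast
qed

lemma leading_iff:
  "leading M (n, q, m) \<longleftrightarrow> q < 4 \<and>
     (\<forall>n'<n. \<forall>q'<4. \<not> nonzero_at M n' q') \<and> (\<forall>q'<q. \<not> nonzero_at M n q') \<and>
     m \<in> carrier K \<and> coeff M (n, q, m) \<noteq> 0 \<and>
     (\<forall>k\<in>carrier K. coeff M (n, q, k) \<noteq> 0 \<longrightarrow> k \<noteq> m \<longrightarrow> (k, m) \<in> lx)"
  (is "?L \<longleftrightarrow> ?R")
proof
  assume L: ?L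
  then have q: "q < 4" and mK: "m \<in> carrier K"
    and zero: "\<And>d. d \<in> indices \<Longrightarrow> precedes d (n, q, m) \<Longrightarrow> coeff M d = 0"
    unfolding leading_def by auto
  have "(k, m) \<in> lx" if k: "k \<in> carrier K" "coeff M (n, q, k) \<noteq> 0" "k \<noteq> m" for k
  proof (rule ccontr)
    assume "(k, m) \<notin> lx"
    then have "(m, k) \<in> lx" using lx_total[OF mK k(1)] k(3) by blast
    then have "precedes (n, q, k) (n, q, m)" by (simp add: precedes_def)
    then show False using zero[of "(n, q, k)"] k q by auto
  qed
  moreover have "\<not> nonzero_at M n' q'" if "n' < n \<and> q' < 4 \<or> n' = n \<and> q' < q" for n' q'
    using zero that q unfolding nonzero_at_def by (auto simp: precedes_def)
  ultimately show ?R using q mK L unfolding leading_def by auto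
next
  assume R: ?R
  then have q: "q < 4" and low: "\<forall>n'<n. \<forall>q<4. \<not> nonzero_at M n' q" "\<forall>q'<q. \<not> nonzero_at M n q'"
    and mK: "m \<in> carrier K" and nz: "coeff M (n, q, m) \<noteq> 0"
    and top: "\<forall>k\<in>carrier K. coeff M (n, q, k) \<noteq> 0 \<longrightarrow> k \<noteq> m \<longrightarrow> (k, m) \<in> lx" by blast+
  have "coeff M d = 0" if d: "d \<in> indices" "precedes d (n, q, m)" for d
  proof (rule ccontr)
    obtain n' q' k' where d': "d = (n', q', k')" "q' < 4" "k' \<in> carrier K" using d(1) by auto
    assume ne: "coeff M d \<noteq> 0"
    then have "\<not> n' < n" "\<not> (n' = n \<and> q' < q)" using low d' unfolding nonzero_at_def by blast+
    then have "n' = n" "q' = q" "(m, k') \<in> lx" using d(2) d' by (auto simp: precedes_def)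
    then show False using top ne d' lx_asym lx_irrefl by blast
  qed
  then show ?L unfolding leading_def using q mK nz by auto
qed

lemma pmat_pos_iff_leading: "pmat_pos F G LF LG M \<longleftrightarrow> (\<exists>c. leading M c \<and> 0 < coeff M c)"
proof -
  have "(\<exists>c. leading M c \<and> 0 < coeff M c) \<longleftrightarrow> (\<exists>n q m. leading M (n, q, m) \<and> 0 < coeff M (n, q, m))"
    by (metis prod_cases3)
  then show ?thesis
    using order_less_imp_not_eq2[of "0::int"] unfolding pmat_pos_unfold leading_iff Bex_def by blast
qed

lemma coeff_pmat_diff: "coeff (pmat_diff M N) c = coeff M c - coeff N c"
  by (simp add: coeff_def pmat_diff_def split: prod.splits)

lemma leading_cong: "(\<And>c. coeff M c = 0 \<longleftrightarrow> coeff N c = 0) \<Longrightarrow> leading M = leading N"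
  unfolding leading_def by (intro ext) blast

lemma leading_sum_earlier:
  assumes S: "\<And>c. coeff S c = coeff M c + coeff N c" and M: "leading M c"
    and N: "\<And>d. d \<in> indices \<Longrightarrow> d = c \<or> precedes d c \<Longrightarrow> coeff N d = 0"
  shows "leading S c \<and> coeff S c = coeff M c"
  using M N unfolding leading_def S by simp

lemma pmat_pos_sum:
  assumes S: "\<And>c. coeff S c = coeff M c + coeff N c" and "pmat_pos F G LF LG M" "pmat_pos F G LF LG N"
  shows "pmat_pos F G LF LG S"
proof -
  obtain a b where a: "leading M a" "0 < coeff M a" and b: "leading N b" "0 < coeff N b"
    using assms(2,3) unfolding pmat_pos_iff_leading by blast
  have ab: "a \<in> indices" "b \<in> indices" using a b unfolding leading_def by blast+
  consider "a = b" | "precedes a b" | "precedes b a" using precedes_total[OF ab] by blast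
  then show ?thesis
  proof cases
    case 1
    then have "leading S a" "0 < coeff S a"
      using a b unfolding leading_def S by auto
    then show ?thesis unfolding pmat_pos_iff_leading by blast
  next
    case 2
    have "coeff N d = 0" if "d \<in> indices" "d = a \<or> precedes d a" for d
      using b(1) that 2 precedes_trans unfolding leading_def by blast
    then show ?thesis using leading_sum_earlier[OF S a(1)] a(2) unfolding pmat_pos_iff_leading by metis
  next
    case 3
    have S': "coeff S c = coeff N c + coeff M c" for c using S by simp
    have "coeff M d = 0" if "d \<in> indices" "d = b \<or> precedes d b" for d
      using a(1) that 3 precedes_trans unfolding leading_def by blast
    then show ?thesis using leading_sum_earlier[OF S' b(1)] b(2) unfolding pmat_pos_iff_leading by metis
  qed
qed

lemma pmat_pos_diff_trans:
  "pmat_pos F G LF LG (pmat_diff B A) \<Longrightarrow> pmat_pos F G LF LG (pmat_diff C B) \<Longrightarrow> pmat_pos F G LF LG (pmat_diff C A)"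
  by (rule pmat_pos_sum[of _ "pmat_diff C B" "pmat_diff B A"]) (simp_all add: coeff_pmat_diff)

lemma not_pmat_pos_diff_self: "\<not> pmat_pos F G LF LG (pmat_diff A A)"
  unfolding pmat_pos_iff_leading by (simp add: coeff_pmat_diff)

lemma pmat_pos_diff_asym:
  assumes "pmat_pos F G LF LG (pmat_diff A B)" shows "\<not> pmat_pos F G LF LG (pmat_diff B A)"
proof
  assume "pmat_pos F G LF LG (pmat_diff B A)"
  moreover have "leading (pmat_diff B A) = leading (pmat_diff A B)"
    by (rule leading_cong) (auto simp: coeff_pmat_diff)
  ultimately show False
    using assms leading_unique unfolding pmat_pos_iff_leading by (fastforce simp: coeff_pmat_diff)
qed

lemma leading_exists:
  assumes M: "proper M" and c: "c \<in> indices" "coeff M c \<noteq> 0"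
  shows "\<exists>d. leading M d"
proof -
  obtain n0 q0 k0 where "c = (n0, q0, k0)" by (cases c)
  then have "q0 < 4 \<and> nonzero_at M n0 q0" using c unfolding nonzero_at_def by auto
  then have ex: "\<exists>n q. q < 4 \<and> nonzero_at M n q" by blast
  define n where "n = (LEAST n. \<exists>q. q < 4 \<and> nonzero_at M n q)"
  have ex_q: "\<exists>q. q < 4 \<and> nonzero_at M n q" unfolding n_def using ex by (rule LeastI_ex)
  define q where "q = (LEAST q. q < 4 \<and> nonzero_at M n q)"
  have q: "q < 4 \<and> nonzero_at M n q" unfolding q_def using ex_q by (rule LeastI_ex)
  have "\<not> nonzero_at M n' q'" if "n' < n" "q' < 4" for n' q'
    using not_less_Least[of n' "\<lambda>n. \<exists>q. q < 4 \<and> nonzero_at M n q"] that unfolding n_def by blast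
  moreover have "\<not> nonzero_at M n q'" if "q' < q" for q'
    using not_less_Least[of q' "\<lambda>q. q < 4 \<and> nonzero_at M n q"] that q unfolding q_def by simp
  ultimately have below: "\<forall>n'<n. \<forall>q'<4. \<not> nonzero_at M n' q'" "\<forall>q'<q. \<not> nonzero_at M n q'"
    by blast+
  define S where "S = {k \<in> carrier K. coeff M (n, q, k) \<noteq> 0}"
  have "S \<subseteq> {k. M (fst (positions ! q)) (snd (positions ! q)) n k \<noteq> 0}"
    unfolding S_def coeff_def by auto
  then have "finite S"
    using properD(4)[OF M] unfolding finite_support_def by (rule finite_subset)
  moreover have "S \<noteq> {}" "S \<subseteq> carrier K" using q unfolding S_def nonzero_at_def by blast+
  ultimately obtain m where m: "m \<in> S"
    and m_max: "\<forall>k\<in>S. k \<noteq> m \<longrightarrow> (k, m) \<in> lx \<inter> carrier K \<times> carrier K"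
    using K.ordering_finite_has_max[OF lex_ordering] by meson
  have "m \<in> carrier K" "coeff M (n, q, m) \<noteq> 0" using m unfolding S_def by blast+
  moreover have "\<forall>k\<in>carrier K. coeff M (n, q, k) \<noteq> 0 \<longrightarrow> k \<noteq> m \<longrightarrow> (k, m) \<in> lx"
    using m_max unfolding S_def by blast
  ultimately have "leading M (n, q, m)"
    unfolding leading_iff using q below by blast
  then show ?thesis by blast
qed

lemma pmat_pos_diff_total:
  assumes "proper A" "proper B" "c \<in> indices" "coeff A c \<noteq> coeff B c"
  shows "pmat_pos F G LF LG (pmat_diff A B) \<or> pmat_pos F G LF LG (pmat_diff B A)"
proof -
  obtain d where d: "leading (pmat_diff A B) d"
    using leading_exists[OF proper_pmat_diff[OF assms(1,2)] assms(3)] assms(4) by (auto simp: coeff_pmat_diff)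
  moreover have "leading (pmat_diff B A) = leading (pmat_diff A B)"
    by (rule leading_cong) (auto simp: coeff_pmat_diff)
  moreover have "0 < coeff (pmat_diff A B) d \<or> 0 < coeff (pmat_diff B A) d"
    using d unfolding leading_def coeff_pmat_diff by linarith
  ultimately show ?thesis unfolding pmat_pos_iff_leading by metis
qed

lemma vanishes_below_coeff:
  "vanishes_below M n \<longleftrightarrow> (\<forall>n'<n. \<forall>q<4. \<forall>k\<in>carrier K. coeff M (n', q, k) = 0)"
proof
  assume V: "vanishes_below M n"
  show "\<forall>n'<n. \<forall>q<4. \<forall>k\<in>carrier K. coeff M (n', q, k) = 0"
  proof (intro allI impI ballI)
    fix n' q :: nat and k assume "n' < n" "q < 4" "k \<in> carrier K"
    then show "coeff M (n', q, k) = 0"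
      using V positions_less_2[of q] unfolding coeff_def by simp
  qed
next
  assume Z: "\<forall>n'<n. \<forall>q<4. \<forall>k\<in>carrier K. coeff M (n', q, k) = 0"
  show "vanishes_below M n"
  proof (intro allI impI ballI)
    fix i j n' k assume ij: "i < (2::nat)" "j < (2::nat)" and "n' < n" "k \<in> carrier K"
    have "(i, j) \<in> set positions" using ij by (simp add: set_positions)
    then obtain q where "q < 4" "positions ! q = (i, j)"
      by (metis in_set_conv_nth length_positions)
    then show "M i j n' k = 0" using Z \<open>n' < n\<close> \<open>k \<in> carrier K\<close> unfolding coeff_def by force
  qed
qed

lemma pmat_pos_transfer:
  fixes \<tau> :: "nat \<Rightarrow> 'a \<times> 'b \<Rightarrow> 'a \<times> 'b"
  assumes closed: "\<And>q k. q < 4 \<Longrightarrow> k \<in> carrier K \<Longrightarrow> \<tau> q k \<in> carrier K"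
    and onto: "\<And>q k. q < 4 \<Longrightarrow> k \<in> carrier K \<Longrightarrow> \<exists>k'\<in>carrier K. \<tau> q k' = k"
    and mono: "\<And>q a b. q < 4 \<Longrightarrow> a \<in> carrier K \<Longrightarrow> b \<in> carrier K \<Longrightarrow> (a, b) \<in> lx \<Longrightarrow> (\<tau> q a, \<tau> q b) \<in> lx"
    and lowest: "\<And>n. vanishes_below M n \<Longrightarrow>
      vanishes_below N n \<and> (\<forall>q<4. \<forall>k\<in>carrier K. coeff N (n, q, k) = coeff M (n, q, \<tau> q k))"
    and M: "pmat_pos F G LF LG M"
  shows "pmat_pos F G LF LG N"
proof -
  obtain n q m where L: "leading M (n, q, m)" and pos: "0 < coeff M (n, q, m)"
    using M unfolding pmat_pos_iff_leading by auto
  then have q: "q < 4" and mK: "m \<in> carrier K"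
    and zero: "\<And>d. d \<in> indices \<Longrightarrow> precedes d (n, q, m) \<Longrightarrow> coeff M d = 0"
    unfolding leading_def by auto
  have "vanishes_below M n"
    unfolding vanishes_below_coeff using zero by (simp add: precedes_def)
  then have N0: "vanishes_below N n" and N1: "\<And>q k. q < 4 \<Longrightarrow> k \<in> carrier K \<Longrightarrow> coeff N (n, q, k) = coeff M (n, q, \<tau> q k)"
    using lowest by blast+
  obtain m' where m': "m' \<in> carrier K" "\<tau> q m' = m" using onto[OF q mK] by blast
  have "leading N (n, q, m')"
    unfolding leading_def
  proof (intro conjI ballI impI)
    show "(n, q, m') \<in> indices" using q m' by simp
    show "coeff N (n, q, m') \<noteq> 0" using N1[OF q m'(1)] m'(2) pos by simp
    fix d assume d: "d \<in> indices" "precedes d (n, q, m')"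
    then obtain n' q' k' where d': "d = (n', q', k')" "q' < 4" "k' \<in> carrier K" by auto
    show "coeff N d = 0"
    proof (cases "n' < n")
      case True
      then show ?thesis using N0 d' unfolding vanishes_below_coeff by blast
    next
      case False
      then have n': "n' = n" and "q' < q \<or> q' = q \<and> (m', k') \<in> lx" using d(2) d' by (auto simp: precedes_def)
      then have "precedes (n, q', \<tau> q' k') (n, q, m)"
        using mono[OF q m'(1) d'(3)] m'(2) by (auto simp: precedes_def)
      then show ?thesis using zero[of "(n, q', \<tau> q' k')"] N1 closed d' n' by simp
    qed
  qed
  then show ?thesis using N1[OF q m'(1)] m'(2) pos
    unfolding pmat_pos_iff_leading by (intro exI[of _ "(n, q, m')"]) simp
qed

lemma pmat_pos_rho_lmult:
  assumes l: "letter_closed l" and M: "pmat_pos F G LF LG M"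
  shows "pmat_pos F G LF LG (rho_lmult l M)"
proof (rule pmat_pos_transfer[OF _ _ _ _ M])
  let ?h = "\<lambda>q. letter_factor l (fst (positions ! q))"
  have h: "?h q \<in> carrier K" for q using letter_factor_closed[OF l] by blast
  show "inv\<^bsub>K\<^esub> (?h q) \<otimes>\<^bsub>K\<^esub> k \<in> carrier K" if "k \<in> carrier K" for q k
    using h that by simp
  show "\<exists>k'\<in>carrier K. inv\<^bsub>K\<^esub> (?h q) \<otimes>\<^bsub>K\<^esub> k' = k" if "k \<in> carrier K" for q k
    using h that by (intro bexI[of _ "?h q \<otimes>\<^bsub>K\<^esub> k"]) (simp_all add: K.m_assoc[symmetric])
  show "(inv\<^bsub>K\<^esub> (?h q) \<otimes>\<^bsub>K\<^esub> a, inv\<^bsub>K\<^esub> (?h q) \<otimes>\<^bsub>K\<^esub> b) \<in> lx"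
    if "a \<in> carrier K" "b \<in> carrier K" "(a, b) \<in> lx" for q a b
    using lx_translate(1)[OF _ that] h by simp
  show "vanishes_below (rho_lmult l M) n \<and>
      (\<forall>q<4. \<forall>k\<in>carrier K. coeff (rho_lmult l M) (n, q, k) = coeff M (n, q, inv\<^bsub>K\<^esub> (?h q) \<otimes>\<^bsub>K\<^esub> k))"
    if "vanishes_below M n" for n
    using rho_lmult_lowest_degree[OF l that] positions_less_2 unfolding coeff_def by simp
qed

lemma pmat_pos_rho_rmult:
  assumes l: "letter_closed l" and M: "pmat_pos F G LF LG M"
  shows "pmat_pos F G LF LG (rho_rmult M l)"
proof (rule pmat_pos_transfer[OF _ _ _ _ M])
  let ?h = "\<lambda>q. letter_factor l (snd (positions ! q))"
  have h: "?h q \<in> carrier K" for q using letter_factor_closed[OF l] by blast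
  show "k \<otimes>\<^bsub>K\<^esub> inv\<^bsub>K\<^esub> (?h q) \<in> carrier K" if "k \<in> carrier K" for q k
    using h that by simp
  show "\<exists>k'\<in>carrier K. k' \<otimes>\<^bsub>K\<^esub> inv\<^bsub>K\<^esub> (?h q) = k" if "k \<in> carrier K" for q k
    using h that by (intro bexI[of _ "k \<otimes>\<^bsub>K\<^esub> ?h q"]) (simp_all add: K.m_assoc)
  show "(a \<otimes>\<^bsub>K\<^esub> inv\<^bsub>K\<^esub> (?h q), b \<otimes>\<^bsub>K\<^esub> inv\<^bsub>K\<^esub> (?h q)) \<in> lx"
    if "a \<in> carrier K" "b \<in> carrier K" "(a, b) \<in> lx" for q a b
    using lx_translate(2)[OF _ that] h by simp
  show "vanishes_below (rho_rmult M l) n \<and>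
      (\<forall>q<4. \<forall>k\<in>carrier K. coeff (rho_rmult M l) (n, q, k) = coeff M (n, q, k \<otimes>\<^bsub>K\<^esub> inv\<^bsub>K\<^esub> (?h q)))"
    if "vanishes_below M n" for n
    using rho_rmult_lowest_degree[OF l that] positions_less_2 unfolding coeff_def by simp
qed

lemma pmat_pos_foldr_rho_lmult:
  "list_all letter_closed x \<Longrightarrow> pmat_pos F G LF LG M \<Longrightarrow> pmat_pos F G LF LG (foldr rho_lmult x M)"
  by (induction x) (auto intro: pmat_pos_rho_lmult)

lemma pmat_pos_foldl_rho_rmult:
  "list_all letter_closed x \<Longrightarrow> pmat_pos F G LF LG M \<Longrightarrow> pmat_pos F G LF LG (foldl rho_rmult M x)"
  by (induction x arbitrary: M) (auto intro: pmat_pos_rho_rmult)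

section \<open>Faithfulness of rho\<close>

lemma gr_lmult_moves_nonzero:
  assumes "h \<in> carrier K" "h \<noteq> \<one>\<^bsub>K\<^esub>" "proper M" "M i j n \<noteq> (\<lambda>x. 0)"
  shows "\<exists>x. gr_lmult K h (M i j n) x \<noteq> M i j n x"
  using K.gr_lmult_fixed_imp_zero[OF lex_ordering assms(1,2) properD(4)[OF assms(3)]] properD(1)[OF assms(3)] assms(4)
  by blast

text \<open>Torsion-freeness of K (gr_lmult_moves_nonzero) keeps the new top coefficient, the previous
  one multiplied by g - 1 for the first letter g, from vanishing.\<close>
lemma rho_word_top_degree:
  assumes "fp_reduced F G w" "i < 2"
  shows "(\<exists>j. rho_word w i j (length w) \<noteq> (\<lambda>x. 0)) \<longleftrightarrow> w = [] \<or> i = letter_index (hd w)"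
  using assms
proof (induction w arbitrary: i)
  case Nil
  then have "rho_word [] i i 0 \<noteq> (\<lambda>x. 0)" by (auto simp: rho_word_def id_mat_def gr_delta_def fun_eq_iff)
  then show ?case by auto
next
  case (Cons l w)
  let ?r = "letter_index l"
  define M where "M = rho_word w"
  have l: "fp_valid F G l" and w: "fp_reduced F G w" and alt: "w = [] \<or> isl l \<noteq> isl (hd w)"
    using Cons.prems by (auto simp: fp_reduced_Cons)
  have r: "?r \<noteq> 1 - ?r" "1 - ?r < 2" by (cases l; simp)+
  have i: "i = ?r \<or> i = 1 - ?r" using Cons.prems(2) by (cases l) auto
  have pM: "proper M" unfolding M_def using w by (simp add: proper_rho_word fp_reduced_letters_closed)
  have above: "M i' j' (Suc (length w)) = (\<lambda>x. 0)" for i' j'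
    unfolding M_def using w by (simp add: rho_word_degree_bound fp_reduced_letters_closed)
  have "w = [] \<or> 1 - ?r = letter_index (hd w)" using alt by (cases l; cases "hd w") auto
  then obtain j where j: "M (1 - ?r) j (length w) \<noteq> (\<lambda>x. 0)"
    using Cons.IH[OF w r(2)] unfolding M_def by blast
  have "rho_lmult l M (1 - ?r) j' (Suc (length w)) = (\<lambda>x. 0)" for j'
    unfolding rho_lmult_rows(2) using above by (simp add: gr_mult_linear)
  moreover have "rho_lmult l M ?r j (Suc (length w)) \<noteq> (\<lambda>x. 0)"
  proof -
    have h: "letter_elem l \<in> carrier K" "letter_elem l \<noteq> \<one>\<^bsub>K\<^esub>"
      using l by (cases l; simp)+
    obtain x where "gr_lmult K (letter_elem l) (M (1 - ?r) j (length w)) x \<noteq> M (1 - ?r) j (length w) x"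
      using gr_lmult_moves_nonzero[OF h pM j] by blast
    then show ?thesis
      using above by (auto simp: rho_lmult_rows gr_mult_linear proper_gr_lmult_one[OF pM] dest: fun_cong[of _ _ x])
  qed
  moreover have "rho_word (l # w) = rho_lmult l M" unfolding M_def rho_word_def by simp
  ultimately show ?case using i r(1) by auto
qed

lemma rho_word_ne_id_mat:
  assumes "fp_reduced F G w" "w \<noteq> []" shows "rho_word w \<noteq> id_mat"
proof
  have "letter_index (hd w) < 2" by (cases "hd w") auto
  then obtain j where "rho_word w (letter_index (hd w)) j (length w) \<noteq> (\<lambda>x. 0)"
    using rho_word_top_degree[OF assms(1)] by blast
  moreover assume "rho_word w = id_mat"
  ultimately show False using assms(2) by (simp add: id_mat_def)
qed

lemma rho_word_inj:
  assumes x: "fp_reduced F G x" and y: "fp_reduced F G y" and eq: "rho_word x = rho_word y"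
  shows "x = y"
proof -
  define x' where "x' = rev (map letter_inv x)"
  have x'_valid: "list_all (fp_valid F G) x'"
    using fp_reduced_letters_valid[OF x] unfolding x'_def by (simp add: list.pred_map list_all_rev fp_valid_letter_inv list.pred_mono_strong)
  define z where "z = x' \<otimes>\<^bsub>free_product F G\<^esub> y"
  have z: "fp_reduced F G z" unfolding z_def using fp_reduced_mult[OF x'_valid y] .
  have "rho_word z = foldr rho_lmult x' (rho_word x)"
    unfolding z_def rho_word_mult_left[OF x'_valid y] eq ..
  also have "\<dots> = id_mat"
    unfolding rho_word_def x'_def by (rule foldr_rho_lmult_inv[OF proper_id_mat fp_reduced_letters_closed[OF x]])
  finally have "z = []" using rho_word_ne_id_mat[OF z] by blast
  then have "y = foldr (fp_cons F G) x []"
    using fp_mult_inv_cancel[OF fp_reduced_letters_valid[OF x] y] unfolding z_def x'_def free_product_simps by simp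
  then show ?thesis using fp_mult_Nil[OF x] by simp
qed

section \<open>The ordering frakF\<close>

lemma pmat_pos_cong: "(\<And>i j. i < 2 \<Longrightarrow> j < 2 \<Longrightarrow> M i j = N i j) \<Longrightarrow> pmat_pos F G LF LG M = pmat_pos F G LF LG N"
proof -
  assume "\<And>i j. i < 2 \<Longrightarrow> j < 2 \<Longrightarrow> M i j = N i j"
  then have eqc: "coeff M c = coeff N c" if "c \<in> indices" for c
    using that positions_less_2 by (auto simp: coeff_def)
  then have "leading M c \<longleftrightarrow> leading N c" for c
    unfolding leading_def by (simp cong: conj_cong ball_cong)
  moreover have "leading M c \<Longrightarrow> coeff M c = coeff N c" for c
    using eqc unfolding leading_def by blast
  ultimately show ?thesis unfolding pmat_pos_iff_leading by metis
qed

lemma frakF_iff: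
  assumes "fp_reduced F G x" "fp_reduced F G y"
  shows "(x, y) \<in> frakF F G LF LG \<longleftrightarrow> pmat_pos F G LF LG (pmat_diff (rho_word y) (rho_word x))"
proof -
  have "pmat_pos F G LF LG (\<lambda>i j n z. rho F G y i j n z - rho F G x i j n z) \<longleftrightarrow>
      pmat_pos F G LF LG (pmat_diff (rho_word y) (rho_word x))"
    using assms by (intro pmat_pos_cong) (simp add: pmat_diff_def rho_eq_rho_word fp_reduced_letters_closed)
  then show ?thesis using assms by (simp add: frakF_def free_product_simps)
qed

lemma proper_eqI:
  assumes "proper M" "proper N" "\<And>c. c \<in> indices \<Longrightarrow> coeff M c = coeff N c"
  shows "M = N"
proof (intro ext)
  fix i j n k
  show "M i j n k = N i j n k"
  proof (cases "i < 2 \<and> j < 2 \<and> k \<in> carrier K")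
    case True
    then have "(i, j) \<in> set positions" by (simp add: set_positions)
    then obtain q where "q < 4" "positions ! q = (i, j)" by (metis in_set_conv_nth length_positions)
    then show ?thesis using assms(3)[of "(n, q, k)"] True by (simp add: coeff_def)
  next
    case False
    then show ?thesis using assms(1,2) properD(1-3) by (metis not_less)
  qed
qed

lemma frakF_total: "total_on (carrier (free_product F G)) (frakF F G LF LG)"
proof (rule total_onI)
  fix x y assume "x \<in> carrier (free_product F G)" "y \<in> carrier (free_product F G)" "x \<noteq> y"
  then have x: "fp_reduced F G x" and y: "fp_reduced F G y" and "rho_word y \<noteq> rho_word x"
    using rho_word_inj by (auto simp: free_product_simps)
  moreover have "proper (rho_word x)" "proper (rho_word y)"
    using x y by (simp_all add: proper_rho_word fp_reduced_letters_closed)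
  ultimately obtain c where "c \<in> indices" "coeff (rho_word y) c \<noteq> coeff (rho_word x) c"
    using proper_eqI by blast
  then show "(x, y) \<in> frakF F G LF LG \<or> (y, x) \<in> frakF F G LF LG"
    using pmat_pos_diff_total \<open>proper (rho_word x)\<close> \<open>proper (rho_word y)\<close> frakF_iff x y by blast
qed

lemma frakF_mult_invariant:
  assumes a: "a \<in> carrier (free_product F G)" and xy: "(x, y) \<in> frakF F G LF LG"
  shows "(a \<otimes>\<^bsub>free_product F G\<^esub> x, a \<otimes>\<^bsub>free_product F G\<^esub> y) \<in> frakF F G LF LG"
    and "(x \<otimes>\<^bsub>free_product F G\<^esub> a, y \<otimes>\<^bsub>free_product F G\<^esub> a) \<in> frakF F G LF LG"
proof -
  have red: "fp_reduced F G a" "fp_reduced F G x" "fp_reduced F G y"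
    using a xy by (auto simp: frakF_def free_product_simps)
  have P: "pmat_pos F G LF LG (pmat_diff (rho_word y) (rho_word x))"
    using xy frakF_iff[OF red(2,3)] by blast
  have "pmat_pos F G LF LG (pmat_diff (rho_word (a \<otimes>\<^bsub>free_product F G\<^esub> y)) (rho_word (a \<otimes>\<^bsub>free_product F G\<^esub> x)))"
    using pmat_pos_foldr_rho_lmult[OF fp_reduced_letters_closed[OF red(1)] P] red
    by (simp add: rho_word_mult_left fp_reduced_letters_valid foldr_rho_lmult_diff)
  then show "(a \<otimes>\<^bsub>free_product F G\<^esub> x, a \<otimes>\<^bsub>free_product F G\<^esub> y) \<in> frakF F G LF LG"
    using red by (simp add: frakF_iff fp_reduced_mult fp_reduced_letters_valid)
  have "pmat_pos F G LF LG (pmat_diff (rho_word (y \<otimes>\<^bsub>free_product F G\<^esub> a)) (rho_word (x \<otimes>\<^bsub>free_product F G\<^esub> a)))"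
    using pmat_pos_foldl_rho_rmult[OF fp_reduced_letters_closed[OF red(1)] P] red
    by (simp add: rho_word_mult_right foldl_rho_rmult_diff)
  then show "(x \<otimes>\<^bsub>free_product F G\<^esub> a, y \<otimes>\<^bsub>free_product F G\<^esub> a) \<in> frakF F G LF LG"
    using red by (simp add: frakF_iff fp_reduced_mult fp_reduced_letters_valid)
qed

theorem frakF_in_orderings: "frakF F G LF LG \<in> orderings (free_product F G)"
proof -
  have R: "(x, y) \<in> frakF F G LF LG \<longleftrightarrow> fp_reduced F G x \<and> fp_reduced F G y \<and>
      pmat_pos F G LF LG (pmat_diff (rho_word y) (rho_word x))" for x y
    using frakF_iff[of x y] by (auto simp: frakF_def free_product_simps)
  have "trans (frakF F G LF LG)" unfolding trans_def R using pmat_pos_diff_trans by blast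
  moreover have "irrefl (frakF F G LF LG)" unfolding irrefl_def R using not_pmat_pos_diff_self by blast
  moreover have "frakF F G LF LG \<subseteq> carrier (free_product F G) \<times> carrier (free_product F G)"
    by (auto simp: frakF_def)
  ultimately show ?thesis
    using frakF_total frakF_mult_invariant unfolding orderings_def strict_linear_order_on_def by blast
qed

lemma pmat_pos_letter_diff:
  assumes l: "letter_closed l1" "letter_closed l2" "letter_index l1 = letter_index l2"
    and less: "(letter_elem l1, letter_elem l2) \<in> lx"
  shows "pmat_pos F G LF LG (pmat_diff (rho_lmult l2 id_mat) (rho_lmult l1 id_mat))"
proof -
  let ?D = "pmat_diff (rho_lmult l2 id_mat) (rho_lmult l1 id_mat)" and ?r = "letter_index l1"
  let ?e1 = "letter_elem l1" and ?e2 = "letter_elem l2"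
  have r: "?r < 2" by (cases l1) auto
  have e: "?e2 \<in> carrier K" "?e1 \<noteq> ?e2"
    using letter_elem_closed[OF l(2)] less lx_irrefl[of ?e2] by auto
  have D0: "coeff ?D (0, q, k) = (if q = ?r then gr_delta ?e2 k - gr_delta ?e1 k else 0)" if "q < 4" for q k
  proof -
    have "q = 0 \<or> q = 1 \<or> q = 2 \<or> q = 3" using that by auto
    moreover have "positions ! 0 = (0, 0)" "positions ! 1 = (1, 1)" "positions ! 2 = (0, 1)"
      "positions ! 3 = (1, 0)" by (simp_all add: positions_def)
    ultimately show ?thesis using r
      by (auto simp: coeff_def pmat_diff_def rho_lmult_id_mat_degree_0 l letter_factor_def)
  qed
  have e2_coeff: "coeff ?D (0, ?r, ?e2) = 1" using D0 r e by (simp add: gr_delta_def)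
  have "\<not> nonzero_at ?D 0 q" if "q < ?r" for q
    using D0 that r unfolding nonzero_at_def by simp
  moreover have "(k, ?e2) \<in> lx" if "coeff ?D (0, ?r, k) \<noteq> 0" "k \<noteq> ?e2" for k
    using D0[of ?r k] that r less by (simp add: gr_delta_def split: if_splits)
  ultimately have "leading ?D (0, ?r, ?e2)"
    unfolding leading_iff using r e e2_coeff by auto
  then show ?thesis unfolding pmat_pos_iff_leading using e2_coeff by (intro exI[of _ "(0, ?r, ?e2)"]) simp
qed

lemma frakF_fp_letter_iff:
  assumes l: "letter_closed l1" "letter_closed l2" "letter_index l1 = letter_index l2"
  shows "(fp_letter l1, fp_letter l2) \<in> frakF F G LF LG \<longleftrightarrow> (letter_elem l1, letter_elem l2) \<in> lx"
proof -
  have iff: "(fp_letter l1, fp_letter l2) \<in> frakF F G LF LG \<longleftrightarrow>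
      pmat_pos F G LF LG (pmat_diff (rho_lmult l2 id_mat) (rho_lmult l1 id_mat))"
    using l by (simp add: frakF_iff fp_reduced_fp_letter rho_word_fp_letter)
  show ?thesis
  proof
    assume P: "(fp_letter l1, fp_letter l2) \<in> frakF F G LF LG"
    show "(letter_elem l1, letter_elem l2) \<in> lx"
    proof (rule ccontr)
      assume not_less: "(letter_elem l1, letter_elem l2) \<notin> lx"
      show False
      proof (cases "letter_elem l1 = letter_elem l2")
        case True
        then have "l1 = l2" using l(3) by (cases l1; cases l2) auto
        then show False using P iff not_pmat_pos_diff_self by simp
      next
        case False
        then have "(letter_elem l2, letter_elem l1) \<in> lx"
          using not_less lx_total letter_elem_closed l by blast
        then show False
          using P iff pmat_pos_letter_diff[OF l(2,1) l(3)[symmetric]] pmat_pos_diff_asym by blast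
      qed
    qed
  qed (use iff pmat_pos_letter_diff[OF l] in blast)
qed

lemma LF_eq_frakF_restriction: "LF = {(f1, f2). f1 \<in> carrier F \<and> f2 \<in> carrier F \<and>
    (fp_letter (Inl f1), fp_letter (Inl f2)) \<in> frakF F G LF LG}"
  using frakF_fp_letter_iff[of "Inl f1" "Inl f2" for f1 f2] F.orderingsD(1)[OF LF]
  by (auto simp: lx_iff LG_irrefl)

lemma LG_eq_frakF_restriction: "LG = {(g1, g2). g1 \<in> carrier G \<and> g2 \<in> carrier G \<and>
    (fp_letter (Inr g1), fp_letter (Inr g2)) \<in> frakF F G LF LG}"
  using frakF_fp_letter_iff[of "Inr g1" "Inr g2" for g1 g2] G.orderingsD(1)[OF LG]
  by (auto simp: lx_iff LF_irrefl)

end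

section \<open>Continuity and injectivity\<close>

context group_pair
begin

lemma ordered_group_pairI: "LF \<in> orderings F \<Longrightarrow> LG \<in> orderings G \<Longrightarrow> ordered_group_pair F G LF LG"
  by (simp add: ordered_group_pair_def ordered_group_pair_axioms_def group_pair_axioms)

lemma frakF_inj_on: "inj_on (\<lambda>(LF, LG). frakF F G LF LG) (orderings F \<times> orderings G)"
proof -
  have "LF = LF' \<and> LG = LG'"
    if O: "LF \<in> orderings F" "LG \<in> orderings G" "LF' \<in> orderings F" "LG' \<in> orderings G"
      and eq: "frakF F G LF LG = frakF F G LF' LG'" for LF LG LF' LG'
  proof -
    interpret o: ordered_group_pair F G LF LG using O(1,2) by (rule ordered_group_pairI)
    interpret o': ordered_group_pair F G LF' LG' using O(3,4) by (rule ordered_group_pairI)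
    show ?thesis using o.LF_eq_frakF_restriction o'.LF_eq_frakF_restriction o.LG_eq_frakF_restriction o'.LG_eq_frakF_restriction eq by metis
  qed
  then show ?thesis unfolding inj_on_def by auto
qed

lemma lex_ord_agree:
  assumes "\<forall>a\<in>fst ` T. \<forall>b\<in>fst ` T. (a, b) \<in> LF \<longleftrightarrow> (a, b) \<in> LF'"
    and "\<forall>a\<in>snd ` T. \<forall>b\<in>snd ` T. (a, b) \<in> LG \<longleftrightarrow> (a, b) \<in> LG'"
  shows "\<forall>x\<in>T. \<forall>y\<in>T. (x, y) \<in> lex_ord LF LG \<longleftrightarrow> (x, y) \<in> lex_ord LF' LG'"
proof (intro ballI)
  fix x y assume "x \<in> T" "y \<in> T"
  then have "fst x \<in> fst ` T" "fst y \<in> fst ` T" "snd x \<in> snd ` T" "snd y \<in> snd ` T" by auto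
  then show "(x, y) \<in> lex_ord LF LG \<longleftrightarrow> (x, y) \<in> lex_ord LF' LG'"
    using assms by (cases x; cases y) (auto simp: lex_ord_def)
qed

lemma gr_pos_cong:
  assumes supp: "{k \<in> carrier K. e k \<noteq> 0} \<subseteq> T"
    and agree: "\<forall>a\<in>T. \<forall>b\<in>T. (a, b) \<in> lex_ord LF LG \<longleftrightarrow> (a, b) \<in> lex_ord LF' LG'"
  shows "gr_pos F G LF LG e = gr_pos F G LF' LG' e"
proof -
  have "(y, m) \<in> lex_ord LF LG \<longleftrightarrow> (y, m) \<in> lex_ord LF' LG'"
    if "y \<in> carrier K" "e y \<noteq> 0" "m \<in> carrier K" "0 < e m" for y m
  proof -
    have "y \<in> T" "m \<in> T" using supp that by auto
    then show ?thesis using agree by blast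
  qed
  then show ?thesis unfolding gr_pos_def carrier_DirProd[symmetric]
    by (intro bex_cong refl conj_cong ball_cong imp_cong) auto
qed

lemma pmat_pos_cong_orders:
  assumes "\<And>i j n. i < 2 \<Longrightarrow> j < 2 \<Longrightarrow> gr_pos F G LF LG (M i j n) = gr_pos F G LF' LG' (M i j n)"
  shows "pmat_pos F G LF LG M = pmat_pos F G LF' LG' M"
proof -
  have "gr_pos F G LF LG (M (fst (positions ! q)) (snd (positions ! q)) n) =
      gr_pos F G LF' LG' (M (fst (positions ! q)) (snd (positions ! q)) n)" if "q < 4" for q n
    using assms positions_less_2[OF that] by blast
  then show ?thesis
    unfolding pmat_pos_def case_filter_first_iff length_positions case_prod_beta by (simp cong: conj_cong)
qed

lemma frakF_Nil_cong:
  assumes s: "fp_reduced F G s"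
    and supp: "\<And>i j n. i < 2 \<Longrightarrow> j < 2 \<Longrightarrow> {k \<in> carrier K. pmat_diff (rho_word s) id_mat i j n k \<noteq> 0} \<subseteq> T"
    and agree: "\<forall>a\<in>T. \<forall>b\<in>T. (a, b) \<in> lex_ord LF LG \<longleftrightarrow> (a, b) \<in> lex_ord LF' LG'"
  shows "([], s) \<in> frakF F G LF LG \<longleftrightarrow> ([], s) \<in> frakF F G LF' LG'"
proof -
  have "pmat_diff (rho_word s) id_mat i j = (\<lambda>n z. rho F G s i j n z - rho F G [] i j n z)"
    if "i < 2" "j < 2" for i j
    using that s rho_eq_rho_word[of "[]" i j] rho_eq_rho_word[of s i j]
    by (simp add: pmat_diff_def rho_word_def fp_reduced_letters_closed)
  then have "pmat_pos F G LF LG (\<lambda>i j n z. rho F G s i j n z - rho F G [] i j n z) =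
      pmat_pos F G LF' LG' (\<lambda>i j n z. rho F G s i j n z - rho F G [] i j n z)"
    using gr_pos_cong[OF supp agree] by (intro pmat_pos_cong_orders) simp
  then show ?thesis using s by (simp add: frakF_def free_product_simps)
qed

text \<open>Whether the empty word lies below finitely many given words depends only on how the two
  orderings compare the finitely many group elements in the supports of their rho-images.\<close>
lemma frakF_Nil_locally_constant:
  assumes LF0: "LF0 \<in> orderings F" and LG0: "LG0 \<in> orderings G"
    and S: "finite S" "S \<subseteq> carrier (free_product F G)"
  shows "\<exists>A B. finite A \<and> A \<subseteq> carrier F \<and> finite B \<and> B \<subseteq> carrier G \<and>
    LF0 \<in> ord_basic F A \<and> LG0 \<in> ord_basic G B \<and>
    (\<forall>LF\<in>ord_basic F A. \<forall>LG\<in>ord_basic G B. \<forall>s\<in>S.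
       ([], s) \<in> frakF F G LF LG \<longleftrightarrow> ([], s) \<in> frakF F G LF0 LG0)"
proof -
  have red: "fp_reduced F G s" if "s \<in> S" for s using S(2) that by (auto simp: free_product_simps)
  define D where "D s = pmat_diff (rho_word s) id_mat" for s
  define T where "T = (\<Union>s\<in>S. \<Union>i<2. \<Union>j<2. \<Union>n\<le>length s. {k \<in> carrier K. D s i j n k \<noteq> 0})"
  have "proper (D s)" if "s \<in> S" for s
    unfolding D_def using red[OF that] proper_id_mat
    by (simp add: proper_pmat_diff proper_rho_word fp_reduced_letters_closed)
  then have "finite T"
    unfolding T_def using S(1) properD(4) by (auto simp: finite_support_def)
  moreover have "T \<subseteq> carrier K" unfolding T_def by blast
  ultimately have TF: "finite (fst ` T)" "fst ` T \<subseteq> carrier F" and TG: "finite (snd ` T)" "snd ` T \<subseteq> carrier G"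
    by (auto simp: carrier_DirProd)
  have supp: "{k \<in> carrier K. D s i j n k \<noteq> 0} \<subseteq> T" if "s \<in> S" "i < 2" "j < 2" for s i j n
  proof (cases "n \<le> length s")
    case False
    then have "D s i j n = (\<lambda>x. 0)"
      using red[OF that(1)] by (simp add: D_def pmat_diff_def rho_word_degree_bound fp_reduced_letters_closed id_mat_def)
    then show ?thesis by simp
  qed (use that in \<open>auto simp: T_def\<close>)
  obtain A where A: "finite A" "A \<subseteq> carrier F" "LF0 \<in> ord_basic F A"
    and A_agree: "\<forall>LF\<in>ord_basic F A. \<forall>a\<in>fst ` T. \<forall>b\<in>fst ` T. (a, b) \<in> LF \<longleftrightarrow> (a, b) \<in> LF0"
    using F.ordering_restriction_locally_constant[OF LF0 TF] by blast
  obtain B where B: "finite B" "B \<subseteq> carrier G" "LG0 \<in> ord_basic G B"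
    and B_agree: "\<forall>LG\<in>ord_basic G B. \<forall>a\<in>snd ` T. \<forall>b\<in>snd ` T. (a, b) \<in> LG \<longleftrightarrow> (a, b) \<in> LG0"
    using G.ordering_restriction_locally_constant[OF LG0 TG] by blast
  have "([], s) \<in> frakF F G LF LG \<longleftrightarrow> ([], s) \<in> frakF F G LF0 LG0"
    if L: "LF \<in> ord_basic F A" "LG \<in> ord_basic G B" and s: "s \<in> S" for LF LG s
  proof (rule frakF_Nil_cong[OF red[OF s] supp[OF s, unfolded D_def]])
    show "\<forall>a\<in>T. \<forall>b\<in>T. (a, b) \<in> lex_ord LF LG \<longleftrightarrow> (a, b) \<in> lex_ord LF0 LG0"
      using A_agree B_agree L by (intro lex_ord_agree) blast+
  qed
  then show ?thesis using A B by blast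
qed

lemma openin_frakF_preimage:
  assumes S: "finite S" "S \<subseteq> carrier (free_product F G)"
  shows "openin (prod_topology (ord_topology F) (ord_topology G))
    ((\<lambda>(LF, LG). frakF F G LF LG) -` ord_basic (free_product F G) S \<inter> (orderings F \<times> orderings G))"
  (is "openin ?T ?U")
proof (subst openin_subopen, intro ballI)
  fix p assume "p \<in> ?U"
  then obtain LF0 LG0 where p: "p = (LF0, LG0)" "LF0 \<in> orderings F" "LG0 \<in> orderings G"
    and below: "\<forall>s\<in>S. ([], s) \<in> frakF F G LF0 LG0"
    by (auto simp: ord_basic_def free_product_simps)
  obtain A B where AB: "finite A" "A \<subseteq> carrier F" "finite B" "B \<subseteq> carrier G"
      "LF0 \<in> ord_basic F A" "LG0 \<in> ord_basic G B"
    and const: "\<And>LF LG s. LF \<in> ord_basic F A \<Longrightarrow> LG \<in> ord_basic G B \<Longrightarrow> s \<in> S \<Longrightarrow>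
      ([], s) \<in> frakF F G LF LG \<longleftrightarrow> ([], s) \<in> frakF F G LF0 LG0"
    using frakF_Nil_locally_constant[OF p(2,3) S] by blast
  have "ord_basic F A \<times> ord_basic G B \<subseteq> ?U"
    using const below ordered_group_pair.frakF_in_orderings[OF ordered_group_pairI]
    by (fastforce simp: ord_basic_def free_product_simps)
  moreover have "openin ?T (ord_basic F A \<times> ord_basic G B)"
    using AB by (simp add: openin_prod_Times_iff openin_ord_basic)
  ultimately show "\<exists>V. openin ?T V \<and> p \<in> V \<and> V \<subseteq> ?U" using p AB by blast
qed

lemma frakF_continuous:
  "continuous_map (prod_topology (ord_topology F) (ord_topology G))
     (ord_topology (free_product F G)) (\<lambda>(LF, LG). frakF F G LF LG)"
  unfolding ord_topology_def[of "free_product F G"]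
proof (rule continuous_on_generated_topo)
  have top: "topspace (prod_topology (ord_topology F) (ord_topology G)) = orderings F \<times> orderings G"
    by (simp add: topspace_ord_topology)
  then show "(\<lambda>(LF, LG). frakF F G LF LG) ` topspace (prod_topology (ord_topology F) (ord_topology G))
      \<subseteq> \<Union>{ord_basic (free_product F G) S | S. finite S \<and> S \<subseteq> carrier (free_product F G)}"
    using ordered_group_pair.frakF_in_orderings[OF ordered_group_pairI] by (auto simp: Union_ord_basic)
  show "openin (prod_topology (ord_topology F) (ord_topology G))
      ((\<lambda>(LF, LG). frakF F G LF LG) -` U \<inter> topspace (prod_topology (ord_topology F) (ord_topology G)))"
    if "U \<in> {ord_basic (free_product F G) S | S. finite S \<and> S \<subseteq> carrier (free_product F G)}" for U
    using that openin_frakF_preimage unfolding top by blast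
qed

end

theorem theorem7p2:
  fixes F :: "('a, 'c) monoid_scheme" and G :: "('b, 'd) monoid_scheme"
  assumes "group F" and "group G"
  shows "continuous_map (prod_topology (ord_topology F) (ord_topology G))
           (ord_topology (free_product F G)) (\<lambda>(LF, LG). frakF F G LF LG)
       \<and> inj_on (\<lambda>(LF, LG). frakF F G LF LG) (orderings F \<times> orderings G)"
proof -
  interpret group_pair F G using assms by (simp add: group_pair_def)
  show ?thesis using frakF_continuous frakF_inj_on by blast
qed

end
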